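(* Let $d$ be an odd prime and $\Pi^j_k$, $\Omega$ as in the context. For a Hermitian operator $\sigma$ on $\mathbb{C}^d$, define the total quadratic Rényi entropy $$T(\sigma)=-\sum_{j=0}^{d}\log_2\Big(\sum_{k=0}^{d-1}\mathrm{Tr}(\sigma\Pi^j_k)^2\Big)$$ whenever all inner sums are positive. Then: (a) every density operator $\sigma$ (positive semidefinite with unit trace) satisfies $T(\sigma)\ge (d+1)\log_2\!\big(\frac{d+1}{2}\big)$; (b) every $\rho\in\Omega$ satisfies $T(\rho)=(d+1)\log_2\!\big(\frac{d+1}{2}\big)$. In particular, every fiducial state attains this minimum.
   Context: Let $d$ be an odd prime and $\omega=e^{2\pi i/d}$; for real $x$, $\omega^{x}$ means $e^{2\pi i x/d}$. Let $\{|k\rangle\}_{k=0}^{d-1}$ be the computational basis of $\mathbb{C}^d$, with indices taken modulo $d$. Let $X|k\rangle=|k+1\rangle$ and $Z|k\rangle=\omega^k|k\rangle$, and $\tau=-e^{i\pi/d}$. For $\mathbf p=(p_1,p_2)\in\mathbb{Z}_d^2$ set $D_{\mathbf p}=\tau^{p_1p_2}X^{p_1}Z^{p_2}$. For $j\in\{0,\dots,d-1\}$, let $\Pi^j_k$ be the rank-one projector onto the eigenvector of $D_{(1,j)}$ with eigenvalue $\omega^k$. Let $\Pi^d_k=|k\rangle\langle k|$. These $d+1$ bases are mutually unbiased. A unit vector $|\phi\rangle$ is fiducial if $|\langle\phi|D_{\mathbf p}|\phi\rangle|^2=\frac1{d+1}$ for all $\mathbf p\neq(0,0)$. $\Omega$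 denotes the set of all operators $\rho=\sum_{j=0}^{d}\sum_{k=0}^{d-1}\big(p^j_k-\tfrac{1}{d+1}\big)\Pi^j_k$ with $p^j_k=\frac1d+\frac{1}{d\sqrt{d+1}}\sum_{r=1}^{d-1}\omega^{\alpha^j_r+kr}$, where the $\alpha^j_r\in\mathbb{R}$ ($j=0,\dots,d$, $r=1,\dots,d-1$) satisfy $\alpha^j_{d-r}=-\alpha^j_r$. *)

theory Defs
  imports Complex_Main "Jordan_Normal_Form.Matrix"
begin

(* Operators on C^d are d x d complex matrices (Jordan_Normal_Form 'mat'),
   computational basis indexed by 0..d-1, indices modulo d. *)

definition omega :: "nat \<Rightarrow> complex" where
  "omega d = exp (2 * pi * \<i> / of_nat d)"

(* omega^x for real x, i.e. e^{2 pi i x / d} *)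
definition omega_pow :: "nat \<Rightarrow> real \<Rightarrow> complex" where
  "omega_pow d x = exp (2 * pi * \<i> * of_real x / of_nat d)"

definition tau :: "nat \<Rightarrow> complex" where
  "tau d = - exp (pi * \<i> / of_nat d)"

definition Xop :: "nat \<Rightarrow> complex mat" where
  "Xop d = mat d d (\<lambda>(a, b). if a = (b + 1) mod d then 1 else 0)"

definition Zop :: "nat \<Rightarrow> complex mat" where
  "Zop d = mat d d (\<lambda>(a, b). if a = b then omega d ^ a else 0)"

definition Dop :: "nat \<Rightarrow> nat \<Rightarrow> nat \<Rightarrow> complex mat" where
  "Dop d p1 p2 = (tau d ^ (p1 * p2)) \<cdot>\<^sub>m (Xop d ^\<^sub>m p1 * Zop d ^\<^sub>m p2)"

definition vnorm2 :: "complex vec \<Rightarrow> real" where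
  "vnorm2 v = (\<Sum>i<dim_vec v. (cmod (v $ i))\<^sup>2)"

definition outer :: "complex vec \<Rightarrow> complex mat" where
  "outer v = mat (dim_vec v) (dim_vec v) (\<lambda>(a, b). v $ a * cnj (v $ b))"

definition expval :: "complex vec \<Rightarrow> complex mat \<Rightarrow> complex" where
  "expval v M = (\<Sum>a<dim_vec v. \<Sum>b<dim_vec v. cnj (v $ a) * M $$ (a, b) * v $ b)"

(* Pi^j_k: for j < d, the rank-one projector onto the (normalised) eigenvector of
   D_(1,j) with eigenvalue omega^k; for j = d, |k><k| *)
definition mub_proj :: "nat \<Rightarrow> nat \<Rightarrow> nat \<Rightarrow> complex mat" where
  "mub_proj d j k =
     (if j = d then mat d d (\<lambda>(a, b). if a = k \<and> b = k then 1 else 0)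
      else (THE P. \<exists>v \<in> carrier_vec d. vnorm2 v = 1 \<and>
                 Dop d 1 j *\<^sub>v v = (omega d ^ k) \<cdot>\<^sub>v v \<and> P = outer v))"

definition mtrace :: "complex mat \<Rightarrow> complex" where
  "mtrace M = (\<Sum>i<dim_row M. M $$ (i, i))"

definition adjoint_op :: "complex mat \<Rightarrow> complex mat" where
  "adjoint_op M = mat (dim_col M) (dim_row M) (\<lambda>(a, b). cnj (M $$ (b, a)))"

definition hermitian_op :: "nat \<Rightarrow> complex mat \<Rightarrow> bool" where
  "hermitian_op d M \<longleftrightarrow> M \<in> carrier_mat d d \<and> adjoint_op M = M"

definition density_op :: "nat \<Rightarrow> complex mat \<Rightarrow> bool" where
  "density_op d M \<longleftrightarrow> hermitian_op d M
     \<and> (\<forall>v \<in> carrier_vec d. Re (expval v M) \<ge> 0) \<and> mtrace M = 1"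

(* Tr(sigma Pi^j_k); real for Hermitian sigma, so we take the real part *)
definition mub_prob :: "nat \<Rightarrow> complex mat \<Rightarrow> nat \<Rightarrow> nat \<Rightarrow> real" where
  "mub_prob d \<sigma> j k = Re (mtrace (\<sigma> * mub_proj d j k))"

definition purity_sum :: "nat \<Rightarrow> complex mat \<Rightarrow> nat \<Rightarrow> real" where
  "purity_sum d \<sigma> j = (\<Sum>k<d. (mub_prob d \<sigma> j k)\<^sup>2)"

definition T_defined :: "nat \<Rightarrow> complex mat \<Rightarrow> bool" where
  "T_defined d \<sigma> \<longleftrightarrow> (\<forall>j\<le>d. purity_sum d \<sigma> j > 0)"

definition total_renyi :: "nat \<Rightarrow> complex mat \<Rightarrow> real" where
  "total_renyi d \<sigma> = - (\<Sum>j\<le>d. log 2 (purity_sum d \<sigma> j))"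

definition pcoef :: "nat \<Rightarrow> (nat \<Rightarrow> nat \<Rightarrow> real) \<Rightarrow> nat \<Rightarrow> nat \<Rightarrow> complex" where
  "pcoef d \<alpha> j k = 1 / of_nat d + 1 / (of_nat d * of_real (sqrt (of_nat d + 1)))
       * (\<Sum>r\<in>{1..d-1}. omega_pow d (\<alpha> j r + of_nat (k * r)))"

definition Omega :: "nat \<Rightarrow> complex mat set" where
  "Omega d = {\<rho>. \<exists>\<alpha> :: nat \<Rightarrow> nat \<Rightarrow> real.
      (\<forall>j\<le>d. \<forall>r\<in>{1..d-1}. \<alpha> j (d - r) = - \<alpha> j r) \<and>
      \<rho> = mat d d (\<lambda>(a, b). \<Sum>j\<le>d. \<Sum>k<d.
              (pcoef d \<alpha> j k - 1 / (of_nat d + 1)) * mub_proj d j k $$ (a, b))}"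

definition fiducial :: "nat \<Rightarrow> complex vec \<Rightarrow> bool" where
  "fiducial d \<phi> \<longleftrightarrow> \<phi> \<in> carrier_vec d \<and> vnorm2 \<phi> = 1 \<and>
     (\<forall>p1<d. \<forall>p2<d. (p1, p2) \<noteq> (0, 0) \<longrightarrow>
        (cmod (expval \<phi> (Dop d p1 p2)))\<^sup>2 = 1 / (of_nat d + 1))"

end

theory Submission
  imports Defs "HOL-Computational_Algebra.Primes" "HOL-Number_Theory.Cong"
begin

text \<open>
  For \<open>j < d\<close> the eigenvectors of \<open>D(1,j)\<close> are the chirps \<open>a \<mapsto> \<omega>^(j a\<^sup>2/2 - k a) / \<surd>d\<close>,
  where \<open>1/2\<close> is the inverse of \<open>2\<close> modulo \<open>d\<close>. Hence \<open>Tr(\<sigma> \<Pi>(j,k))\<close> is the discrete Fourier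
  transform in \<open>k\<close> of the chirped cyclic diagonals of \<open>\<sigma>\<close>, and Parseval's identity, applied once
  in \<open>k\<close> and once in \<open>j\<close>, turns the sum of all \<open>d + 1\<close> purities into \<open>(Tr \<sigma>)\<^sup>2 + Tr \<sigma>\<^sup>2\<close>.
  For a density operator this is at most \<open>2\<close>, because \<open>|\<sigma>(a,b)|\<^sup>2 \<le> \<sigma>(a,a) \<sigma>(b,b)\<close>, and the
  inequality \<open>ln x \<le> x - 1\<close> turns this bound on the sum into the lower bound on \<open>T\<close>.

  Quadratic Gauss sums show that the chirp bases are mutually unbiased, so for \<open>\<rho> \<in> \<Omega>\<close>
  one gets \<open>Tr(\<rho> \<Pi>(j,k)) = p(j,k)\<close>; as a function of \<open>k\<close> this is a Fourier transform of a vector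
  with entries of modulus \<open>1/d\<close> and \<open>1/(d \<surd>(d+1))\<close>, so Parseval gives purity \<open>2/(d+1)\<close>
  in every basis. For a fiducial vector the chirped diagonals of \<open>|\<phi>\<rangle>\<langle>\<phi>|\<close> are, up to a phase,
  expectation values of displacement operators, which again forces every purity to be \<open>2/(d+1)\<close>.
\<close>

section \<open>Roots of unity and Parseval's identity\<close>

definition omega_int :: "nat \<Rightarrow> int \<Rightarrow> complex" where
  "omega_int d n = exp (2 * pi * \<i> * of_int n / of_nat d)"

lemma omega_int_add: "omega_int d (m + n) = omega_int d m * omega_int d n"
  unfolding omega_int_def by (simp add: exp_add[symmetric] add_divide_distrib distrib_left)

lemma omega_int_0 [simp]: "omega_int d 0 = 1"
  unfolding omega_int_def by simp

lemma omega_int_cis: "omega_int d n = cis (2 * pi * of_int n / of_nat d)"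
  unfolding omega_int_def cis_conv_exp by (simp add: field_simps)

lemma cnj_omega_int: "cnj (omega_int d n) = omega_int d (- n)"
  unfolding omega_int_cis by (simp add: cis_cnj)

lemma norm_omega_int [simp]: "cmod (omega_int d n) = 1"
  unfolding omega_int_def by (simp add: norm_exp_eq_Re)

lemma omega_int_mult_cnj [simp]: "omega_int d n * cnj (omega_int d n) = 1"
  using complex_norm_square[of "omega_int d n"] by simp

lemma omega_int_diff: "omega_int d (m - n) = omega_int d m * cnj (omega_int d n)"
  using omega_int_add[of d m "- n"] by (simp add: cnj_omega_int)

lemma omega_int_mult_nat: "omega_int d (int k * n) = omega_int d n ^ k"
  unfolding omega_int_def by (simp add: exp_of_nat_mult[symmetric] field_simps)

lemma omega_power: "omega d ^ k = omega_int d (int k)"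
  using omega_int_mult_nat[of d k 1] by (simp add: omega_def omega_int_def)

lemma omega_int_multiple:
  assumes "d > 0" shows "omega_int d (int d * q) = 1"
proof -
  have "2 * pi * \<i> * of_int (int d * q) / of_nat d = \<i> * complex_of_real (2 * pi * of_int q)"
    using assms by (simp add: field_simps)
  then have "omega_int d (int d * q) = cis (2 * pi * of_int q)"
    unfolding omega_int_def cis_conv_exp by simp
  also have "\<dots> = 1" by (simp add: complex_eq_iff cos_int_2pin)
  finally show ?thesis .
qed

lemma omega_int_periodic:
  assumes "d > 0" "m - n = int d * q"
  shows "omega_int d m = omega_int d n"
  using omega_int_add[of d n "int d * q"] omega_int_multiple[OF assms(1)] assms(2)
  by (simp add: algebra_simps)

lemma omega_int_cong:
  assumes "d > 0" "[m = n] (mod int d)"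
  shows "omega_int d m = omega_int d n"
  using assms(2) unfolding cong_iff_dvd_diff by (auto elim!: dvdE intro: omega_int_periodic[OF assms(1)])

lemma dvd_if_omega_int_eq_1:
  assumes "d > 0" "omega_int d n = 1" shows "int d dvd n"
proof -
  have "cos (2 * pi * of_int n / d) = 1"
    using assms(2) unfolding omega_int_cis by (metis cis.sel(1) one_complex.sel(1))
  then obtain x where "2 * pi * of_int n / d = real_of_int x * 2 * pi"
    using cos_one_2pi_int by blast
  then have "real_of_int n = real_of_int x * d" using assms(1) by (simp add: field_simps)
  then have "n = x * int d" by (metis of_int_eq_iff of_int_mult of_int_of_nat_eq)
  then show ?thesis by simp
qed

lemma sum_omega_int_mult:
  assumes "d > 0"
  shows "(\<Sum>k<d. omega_int d (int k * n)) = (if int d dvd n then of_nat d else 0)"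
proof (cases "int d dvd n")
  case True
  then obtain q where "n = int d * q" by blast
  then have "omega_int d (int k * n) = 1" for k
    using omega_int_multiple[OF assms, of "int k * q"] by (simp add: mult.left_commute)
  then show ?thesis using True by simp
next
  case False
  then have "omega_int d n \<noteq> 1" using dvd_if_omega_int_eq_1[OF assms] by blast
  moreover have "omega_int d n ^ d = 1"
    using omega_int_mult_nat[of d d n] omega_int_multiple[OF assms] by simp
  ultimately show ?thesis using False by (simp add: sum_gp_strict omega_int_mult_nat)
qed

lemma eq_if_dvd_diff_less:
  assumes "a < d" "b < d" "int d dvd (int a - int b)" shows "a = b"
proof -
  have "[int a = int b] (mod int d)" using assms(3) by (simp add: cong_iff_dvd_diff)
  then have "[a = b] (mod d)" by (simp add: cong_int_iff)
  then show ?thesis using assms(1,2) by (rule cong_less_modulus_unique_nat)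
qed

lemma prime_dvd_mult_diff_iff:
  assumes "prime d" "\<not> int d dvd c" "a < d" "b < d"
  shows "int d dvd (c * (int a - int b)) \<longleftrightarrow> a = b"
proof -
  have "prime (int d)" using assms(1) by simp
  then show ?thesis using prime_dvd_mult_iff[of "int d"] assms eq_if_dvd_diff_less by auto
qed

lemma sum_omega_int_orthogonal:
  assumes "prime d" "\<not> int d dvd c" "a < d" "b < d"
  shows "(\<Sum>k<d. omega_int d (int k * (c * (int a - int b)))) = (if a = b then of_nat d else 0)"
  using sum_omega_int_mult[of d "c * (int a - int b)"] prime_dvd_mult_diff_iff[OF assms]
    prime_gt_0_nat[OF assms(1)] by simp

lemma parseval_omega_int:
  fixes x :: "nat \<Rightarrow> complex"
  assumes "prime d" "\<not> int d dvd c"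
  shows "(\<Sum>k<d. (cmod (\<Sum>a<d. omega_int d (int k * c * int a) * x a))\<^sup>2)
       = real d * (\<Sum>a<d. (cmod (x a))\<^sup>2)"
proof -
  have expand: "(\<Sum>a<d. omega_int d (int k * c * int a) * x a)
        * cnj (\<Sum>b<d. omega_int d (int k * c * int b) * x b)
      = (\<Sum>a<d. \<Sum>b<d. omega_int d (int k * (c * (int a - int b))) * (x a * cnj (x b)))" for k
    unfolding cnj_sum sum_product complex_cnj_mult
  proof (intro sum.cong refl)
    fix a b
    have "int k * (c * (int a - int b)) = int k * c * int a - int k * c * int b"
      by (simp add: algebra_simps)
    then show "omega_int d (int k * c * int a) * x a * (cnj (omega_int d (int k * c * int b)) * cnj (x b))
      = omega_int d (int k * (c * (int a - int b))) * (x a * cnj (x b))"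
      by (simp add: omega_int_diff mult_ac)
  qed
  have "complex_of_real (\<Sum>k<d. (cmod (\<Sum>a<d. omega_int d (int k * c * int a) * x a))\<^sup>2)
      = (\<Sum>k<d. \<Sum>a<d. \<Sum>b<d. omega_int d (int k * (c * (int a - int b))) * (x a * cnj (x b)))"
    unfolding of_real_sum complex_norm_square expand ..
  also have "\<dots> = (\<Sum>a<d. \<Sum>k<d. \<Sum>b<d. omega_int d (int k * (c * (int a - int b))) * (x a * cnj (x b)))"
    by (rule sum.swap)
  also have "\<dots> = (\<Sum>a<d. \<Sum>b<d. (\<Sum>k<d. omega_int d (int k * (c * (int a - int b)))) * (x a * cnj (x b)))"
    unfolding sum_distrib_right by (intro sum.cong refl sum.swap)
  also have "\<dots> = (\<Sum>a<d. \<Sum>b<d. if b = a then of_nat d * (x a * cnj (x b)) else 0)"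
    by (intro sum.cong refl) (auto simp: sum_omega_int_orthogonal[OF assms])
  also have "\<dots> = (\<Sum>a<d. of_nat d * (x a * cnj (x a)))"
    by (simp add: sum.delta)
  also have "\<dots> = complex_of_real (real d * (\<Sum>a<d. (cmod (x a))\<^sup>2))"
    unfolding of_real_mult of_real_sum complex_norm_square sum_distrib_left by simp
  finally show ?thesis by (simp only: of_real_eq_iff)
qed

lemma sum_cyclic_shift:
  fixes a d :: nat
  assumes "d > 0"
  shows "(\<Sum>t<d. g ((a + t) mod d)) = (\<Sum>b<d. g b)"
proof -
  have inj: "inj_on (\<lambda>t. (a + t) mod d) {..<d}"
  proof (rule inj_onI)
    fix t t' assume "t \<in> {..<d}" "t' \<in> {..<d}" "(a + t) mod d = (a + t') mod d"
    moreover from this(3) have "[t = t'] (mod d)"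
      by (simp add: cong_def[symmetric] cong_add_lcancel_nat)
    ultimately show "t = t'" by (simp add: cong_less_modulus_unique_nat)
  qed
  have "(\<lambda>t. (a + t) mod d) ` {..<d} = {..<d}"
    using assms by (intro card_subset_eq) (auto simp: card_image[OF inj])
  then show ?thesis using sum.reindex[OF inj, of g] by simp
qed

lemma sum_lessThan_split_0:
  fixes d :: nat
  assumes "d > 0"
  shows "(\<Sum>r<d. f r) = f 0 + (\<Sum>r = 1..d - 1. f r)"
proof -
  obtain m where m: "d = Suc m" using assms gr0_implies_Suc by blast
  have "(\<Sum>r<d. f r) = f 0 + (\<Sum>r<m. f (Suc r))" unfolding m by (rule sum.lessThan_Suc_shift)
  also have "(\<Sum>r<m. f (Suc r)) = (\<Sum>r = 1..m. f r)" by (rule sum_bounds_lt_plus1)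
  finally show ?thesis using m by simp
qed

lemma int_add_mod_eq: "int ((a + t) mod d) = int a + int t - int d * int ((a + t) div d)"
proof -
  have "int (a + t) = int ((a + t) mod d) + int d * int ((a + t) div d)"
    by (metis mod_mult_div_eq mult.commute of_nat_add of_nat_mult)
  then show ?thesis by simp
qed

lemma omega_int_quadratic_shift:
  assumes "d > 0"
  shows "omega_int d (A * int ((b + t) mod d) ^ 2 + B * int ((b + t) mod d))
       = omega_int d (A * int b ^ 2 + B * int b) * omega_int d (A * int t ^ 2 + B * int t)
         * omega_int d (int b * (2 * A * int t))"
proof -
  define q where "q = int ((b + t) div d)"
  have "omega_int d (A * int ((b + t) mod d) ^ 2 + B * int ((b + t) mod d))
      = omega_int d (A * int b ^ 2 + B * int b + (A * int t ^ 2 + B * int t) + int b * (2 * A * int t))"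
    by (rule omega_int_periodic[OF assms, of _ _ "A * (- 2 * (int b + int t) * q + int d * q * q) - B * q"])
      (simp add: int_add_mod_eq q_def[symmetric] algebra_simps power2_eq_square)
  then show ?thesis by (simp only: omega_int_add)
qed

lemma norm_gauss_sum_sq:
  assumes "prime d" "\<not> int d dvd (2 * A)"
  shows "(cmod (\<Sum>a<d. omega_int d (A * int a ^ 2 + B * int a)))\<^sup>2 = real d"
proof -
  have d0: "d > 0" using assms prime_gt_0_nat by blast
  define F where "F a = A * int a ^ 2 + B * int a" for a :: nat
  have "complex_of_real ((cmod (\<Sum>a<d. omega_int d (F a)))\<^sup>2)
      = (\<Sum>b<d. \<Sum>a<d. omega_int d (F a) * cnj (omega_int d (F b)))"
    unfolding complex_norm_square cnj_sum sum_product by (rule sum.swap)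
  also have "\<dots> = (\<Sum>b<d. \<Sum>t<d. omega_int d (F ((b + t) mod d)) * cnj (omega_int d (F b)))"
    by (intro sum.cong refl sum_cyclic_shift[OF d0, symmetric])
  also have "\<dots> = (\<Sum>b<d. \<Sum>t<d. omega_int d (F t) * omega_int d (int b * (2 * A * int t)))"
    unfolding F_def omega_int_quadratic_shift[OF d0]
    by (intro sum.cong refl) (simp add: mult_ac)
  also have "\<dots> = (\<Sum>t<d. omega_int d (F t) * (\<Sum>b<d. omega_int d (int b * (2 * A * int t))))"
    unfolding sum_distrib_left by (rule sum.swap)
  also have "\<dots> = (\<Sum>t<d. if t = 0 then of_nat d else 0)"
  proof (intro sum.cong refl)
    fix t assume "t \<in> {..<d}"
    then have "int d dvd (2 * A * int t) \<longleftrightarrow> t = 0"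
      using prime_dvd_mult_diff_iff[OF assms(1,2), of t 0] d0 by simp
    then show "omega_int d (F t) * (\<Sum>b<d. omega_int d (int b * (2 * A * int t))) = (if t = 0 then of_nat d else 0)"
      unfolding sum_omega_int_mult[OF d0] by (simp add: F_def)
  qed
  also have "\<dots> = of_nat d" using d0 by (simp add: sum.delta)
  finally show ?thesis unfolding F_def by (metis of_real_of_nat_eq of_real_eq_iff)
qed


section \<open>Displacement operators\<close>

definition inv_two :: "nat \<Rightarrow> int" where
  "inv_two d = int ((d + 1) div 2)"

lemma inv_two_odd: assumes "odd d" shows "int d = 2 * inv_two d - 1"
  using assms by (auto simp: inv_two_def elim!: oddE)

lemma tau_eq_omega_int: assumes "odd d" shows "tau d = omega_int d (inv_two d)"
proof -
  obtain m where m: "d = 2 * m + 1" using assms oddE by blast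
  have "2 * pi * \<i> * of_int (inv_two d) / of_nat d = \<i> * pi + pi * \<i> / d"
  proof -
    have "(of_nat d :: complex) \<noteq> 0" using m by (metis add_eq_0_iff_both_eq_0 of_nat_eq_0_iff one_neq_zero)
    moreover have "(of_nat d :: complex) = 2 * of_nat m + 1" unfolding m by simp
    moreover have "inv_two d = int m + 1" unfolding inv_two_def m by simp
    ultimately show ?thesis by (simp add: field_simps)
  qed
  then have "omega_int d (inv_two d) = exp (\<i> * pi) * exp (pi * \<i> / d)"
    unfolding omega_int_def by (simp add: exp_add)
  also have "\<dots> = tau d" unfolding tau_def by simp
  finally show ?thesis by simp
qed

lemma Xop_carrier: "Xop d \<in> carrier_mat d d"
  unfolding Xop_def by simp

lemma Zop_carrier: "Zop d \<in> carrier_mat d d"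
  unfolding Zop_def by simp

lemma Xop_pow:
  assumes "d > 0"
  shows "Xop d ^\<^sub>m p = mat d d (\<lambda>(a, b). if a = (b + p) mod d then 1 else 0)"
proof (induction p)
  case 0
  show ?case unfolding pow_mat.simps using Xop_carrier[of d]
    by (intro eq_matI) auto
next
  case (Suc p)
  show ?case
  proof (intro eq_matI)
    fix a b assume ab: "a < dim_row (mat d d (\<lambda>(a, b). if a = (b + Suc p) mod d then 1 else 0))"
      "b < dim_col (mat d d (\<lambda>(a, b). if a = (b + Suc p) mod d then 1 else 0))"
    then have a: "a < d" and b: "b < d" by auto
    have "(Xop d ^\<^sub>m Suc p) $$ (a, b) = (\<Sum>c<d. (if a = (c + p) mod d then 1 else 0) * (if c = (b + 1) mod d then 1 else 0))"
      using a b unfolding pow_mat.simps Suc.IH unfolding Xop_def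
      by (simp add: times_mat_def scalar_prod_def atLeast0LessThan row_def col_def)
    also have "\<dots> = (\<Sum>c<d. if c = (b + 1) mod d then (if a = (c + p) mod d then 1 else 0) else 0)"
      by (intro sum.cong refl) auto
    also have "\<dots> = (if a = ((b + 1) mod d + p) mod d then 1 else 0)"
      using assms by (simp add: sum.delta')
    also have "\<dots> = (if a = (b + Suc p) mod d then 1 else 0)"
      by (simp add: mod_add_left_eq)
    finally show "(Xop d ^\<^sub>m Suc p) $$ (a, b) = mat d d (\<lambda>(a, b). if a = (b + Suc p) mod d then 1 else 0) $$ (a, b)"
      using a b by simp
  qed (use Xop_carrier[of d] in auto)
qed

lemma Zop_pow: "Zop d ^\<^sub>m p = mat d d (\<lambda>(a, b). if a = b then omega_int d (int p * int a) else 0)"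
proof (induction p)
  case 0
  show ?case unfolding pow_mat.simps using Zop_carrier[of d]
    by (intro eq_matI) auto
next
  case (Suc p)
  show ?case
  proof (intro eq_matI)
    fix a b assume ab: "a < dim_row (mat d d (\<lambda>(a, b). if a = b then omega_int d (int (Suc p) * int a) else 0))"
      "b < dim_col (mat d d (\<lambda>(a, b). if a = b then omega_int d (int (Suc p) * int a) else 0))"
    then have a: "a < d" and b: "b < d" by auto
    have "(Zop d ^\<^sub>m Suc p) $$ (a, b) = (\<Sum>c<d. (if a = c then omega_int d (int p * int a) else 0) * (if c = b then omega_int d (int c) else 0))"
      using a b unfolding pow_mat.simps Suc.IH unfolding Zop_def omega_power
      by (simp add: times_mat_def scalar_prod_def atLeast0LessThan row_def col_def)
    also have "\<dots> = (\<Sum>c<d. if c = a then (if a = b then omega_int d (int p * int a) * omega_int d (int c) else 0) else 0)"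
      by (intro sum.cong refl) auto
    also have "\<dots> = (if a = b then omega_int d (int p * int a) * omega_int d (int a) else 0)"
      using a by (simp add: sum.delta)
    also have "\<dots> = (if a = b then omega_int d (int (Suc p) * int a) else 0)"
      by (simp add: omega_int_add[symmetric] algebra_simps)
    finally show "(Zop d ^\<^sub>m Suc p) $$ (a, b) = mat d d (\<lambda>(a, b). if a = b then omega_int d (int (Suc p) * int a) else 0) $$ (a, b)"
      using a b by simp
  qed (use Zop_carrier[of d] in auto)
qed

lemma Dop_carrier: "Dop d p1 p2 \<in> carrier_mat d d"
  unfolding Dop_def
  using mult_carrier_mat[OF pow_carrier_mat[OF Xop_carrier[of d], of p1] pow_carrier_mat[OF Zop_carrier[of d], of p2]]
  by simp

lemma Dop_entry:
  assumes "odd d" "a < d" "b < d"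
  shows "Dop d p1 p2 $$ (a, b) = (if a = (b + p1) mod d then omega_int d (inv_two d * int p1 * int p2 + int p2 * int b) else 0)"
proof -
  have d0: "d > 0" using assms(2) by simp
  have "(Xop d ^\<^sub>m p1 * Zop d ^\<^sub>m p2) $$ (a, b)
      = (\<Sum>c<d. (if a = (c + p1) mod d then 1 else 0) * (if c = b then omega_int d (int p2 * int c) else 0))"
    using assms unfolding Xop_pow[OF d0] Zop_pow
    by (simp add: times_mat_def scalar_prod_def atLeast0LessThan row_def col_def)
  also have "\<dots> = (\<Sum>c<d. if c = b then (if a = (c + p1) mod d then omega_int d (int p2 * int c) else 0) else 0)"
    by (intro sum.cong refl) auto
  also have "\<dots> = (if a = (b + p1) mod d then omega_int d (int p2 * int b) else 0)"
    using assms by (simp only: sum.delta finite_lessThan lessThan_iff if_True)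
  finally have e: "(Xop d ^\<^sub>m p1 * Zop d ^\<^sub>m p2) $$ (a, b) = (if a = (b + p1) mod d then omega_int d (int p2 * int b) else 0)" .
  have t: "tau d ^ (p1 * p2) = omega_int d (inv_two d * int p1 * int p2)"
    using omega_int_mult_nat[of d "p1 * p2" "inv_two d"] tau_eq_omega_int[OF assms(1)]
    by (simp add: mult_ac)
  have "Dop d p1 p2 $$ (a, b) = tau d ^ (p1 * p2) * (Xop d ^\<^sub>m p1 * Zop d ^\<^sub>m p2) $$ (a, b)"
    unfolding Dop_def using assms pow_mat_dim_square(1)[OF Xop_carrier[of d], of p1]
      pow_mat_dim_square(2)[OF Zop_carrier[of d], of p2]
    by (simp add: index_smult_mat)
  also have "\<dots> = (if a = (b + p1) mod d then omega_int d (inv_two d * int p1 * int p2 + int p2 * int b) else 0)"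
    unfolding e t by (simp add: omega_int_add)
  finally show ?thesis .
qed


definition pred_mod :: "nat \<Rightarrow> nat \<Rightarrow> nat" where
  "pred_mod d a = (if a = 0 then d - 1 else a - 1)"

lemma pred_mod_iff:
  assumes "a < d" "b < d"
  shows "a = (b + 1) mod d \<longleftrightarrow> b = pred_mod d a"
  using assms by (cases "Suc b = d") (auto simp: pred_mod_def)

lemma pred_mod_less: "a < d \<Longrightarrow> pred_mod d a < d"
  unfolding pred_mod_def by auto

lemma Dop_1_mult_vec_index:
  assumes "odd d" "v \<in> carrier_vec d" "a < d"
  shows "(Dop d 1 j *\<^sub>v v) $ a
       = omega_int d (inv_two d * int j + int j * int (pred_mod d a)) * v $ (pred_mod d a)"
proof -
  have "(Dop d 1 j *\<^sub>v v) $ a = (\<Sum>b<d. Dop d 1 j $$ (a, b) * v $ b)"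
    using assms Dop_carrier[of d 1 j]
    by (simp add: mult_mat_vec_def scalar_prod_def atLeast0LessThan row_def)
  also have "\<dots> = (\<Sum>b<d. if b = pred_mod d a
                     then omega_int d (inv_two d * int j + int j * int b) * v $ b else 0)"
  proof (intro sum.cong refl)
    fix b assume "b \<in> {..<d}"
    then have b: "b < d" by simp
    show "Dop d 1 j $$ (a, b) * v $ b = (if b = pred_mod d a
                     then omega_int d (inv_two d * int j + int j * int b) * v $ b else 0)"
      unfolding Dop_entry[OF assms(1,3) b] pred_mod_iff[OF assms(3) b] by simp
  qed
  also have "\<dots> = omega_int d (inv_two d * int j + int j * int (pred_mod d a)) * v $ (pred_mod d a)"
    using pred_mod_less[OF assms(3)] by (simp add: sum.delta)
  finally show ?thesis .
qed

section \<open>The chirp bases\<close>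

definition mub_phase :: "nat \<Rightarrow> nat \<Rightarrow> nat \<Rightarrow> nat \<Rightarrow> int" where
  "mub_phase d j k a = inv_two d * int j * int a ^ 2 - int k * int a"

definition mub_vec :: "nat \<Rightarrow> nat \<Rightarrow> nat \<Rightarrow> complex vec" where
  "mub_vec d j k = (if j = d then unit_vec d k
     else vec d (\<lambda>a. complex_of_real (1 / sqrt (real d)) * omega_int d (mub_phase d j k a)))"

lemma mub_vec_carrier: "mub_vec d j k \<in> carrier_vec d"
  unfolding mub_vec_def by auto

lemma dim_mub_vec [simp]: "dim_vec (mub_vec d j k) = d"
  using mub_vec_carrier by auto

lemma mub_vec_index: "j < d \<Longrightarrow> a < d \<Longrightarrow> mub_vec d j k $ a = complex_of_real (1 / sqrt (real d)) * omega_int d (mub_phase d j k a)"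
  unfolding mub_vec_def by simp

lemma mub_vec_index_computational: "a < d \<Longrightarrow> mub_vec d d k $ a = (if a = k then 1 else 0)"
  unfolding mub_vec_def by (simp add: unit_vec_def)

lemma mub_vec_eigen:
  assumes "odd d" "j < d"
  shows "Dop d 1 j *\<^sub>v mub_vec d j k = omega d ^ k \<cdot>\<^sub>v mub_vec d j k"
proof (rule eq_vecI)
  have d0: "d > 0" using assms by simp
  show "dim_vec (Dop d 1 j *\<^sub>v mub_vec d j k) = dim_vec (omega d ^ k \<cdot>\<^sub>v mub_vec d j k)"
    using Dop_carrier[of d 1 j] by simp
  fix a assume "a < dim_vec (omega d ^ k \<cdot>\<^sub>v mub_vec d j k)"
  then have a: "a < d" by simp
  define c where "c = complex_of_real (1 / sqrt (real d))"
  define e :: int where "e = (if a = 0 then 1 else 0)"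
  have pa: "int (pred_mod d a) = int a - 1 + int d * e"
    using a unfolding e_def pred_mod_def by (simp add: of_nat_diff)
  have "(Dop d 1 j *\<^sub>v mub_vec d j k) $ a = omega_int d (inv_two d * int j + int j * int (pred_mod d a)) * (c * omega_int d (mub_phase d j k (pred_mod d a)))"
    using Dop_1_mult_vec_index[OF assms(1) mub_vec_carrier a] mub_vec_index[OF assms(2) pred_mod_less[OF a]] c_def by simp
  also have "\<dots> = c * omega_int d (inv_two d * int j + int j * int (pred_mod d a) + mub_phase d j k (pred_mod d a))"
    by (simp add: omega_int_add)
  also have "omega_int d (inv_two d * int j + int j * int (pred_mod d a) + mub_phase d j k (pred_mod d a)) = omega_int d (int k + mub_phase d j k a)"
  proof (rule omega_int_periodic[OF d0])
    let ?h = "inv_two d"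
    show "inv_two d * int j + int j * int (pred_mod d a) + mub_phase d j k (pred_mod d a) - (int k + mub_phase d j k a)
        = int d * (int j * (1 - int a) + e * (int j + 2 * ?h * int j * (int a - 1) + ?h * int j * int d * e - int k))"
      unfolding mub_phase_def pa inv_two_odd[OF assms(1)] by (simp add: algebra_simps power2_eq_square)
  qed
  also have "c * omega_int d (int k + mub_phase d j k a) = omega d ^ k * (c * omega_int d (mub_phase d j k a))"
    by (simp add: omega_int_add omega_power)
  also have "\<dots> = (omega d ^ k \<cdot>\<^sub>v mub_vec d j k) $ a"
    using mub_vec_index[OF assms(2) a] a c_def by simp
  finally show "(Dop d 1 j *\<^sub>v mub_vec d j k) $ a = (omega d ^ k \<cdot>\<^sub>v mub_vec d j k) $ a" .
qed

lemma of_real_sqrt_mult_self: "complex_of_real (sqrt (real d)) * complex_of_real (sqrt (real d)) = of_nat d"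
  by (simp flip: of_real_mult)

lemma vnorm2_mub_vec: assumes "j \<le> d" "k < d" shows "vnorm2 (mub_vec d j k) = 1"
proof (cases "j = d")
  case True
  have "vnorm2 (mub_vec d j k) = (\<Sum>a<d. (cmod (if a = k then 1 else 0))\<^sup>2)"
    unfolding vnorm2_def True using mub_vec_index_computational by (intro sum.cong) auto
  also have "\<dots> = (\<Sum>a<d. if a = k then 1 else 0)" by (intro sum.cong) auto
  also have "\<dots> = 1" using assms by simp
  finally show ?thesis .
next
  case False
  then have j: "j < d" using assms by simp
  have d0: "d > 0" using assms by simp
  have "vnorm2 (mub_vec d j k) = (\<Sum>a<d. (cmod (complex_of_real (1 / sqrt (real d)) * omega_int d (mub_phase d j k a)))\<^sup>2)"
    unfolding vnorm2_def using mub_vec_index[OF j] by (intro sum.cong) auto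
  also have "\<dots> = (\<Sum>a<d. 1 / real d)"
    by (intro sum.cong refl) (simp add: norm_mult norm_divide power_divide)
  also have "\<dots> = 1" using d0 by simp
  finally show ?thesis .
qed

text \<open>The eigenvalue equation is a first-order recurrence in the index, so every eigenspace of
  \<open>D(1,j)\<close> is a line; this makes the \<open>THE\<close> in \<open>mub_proj\<close> well defined.\<close>

lemma eigenvector_Dop_1_index:
  assumes "odd d" "j < d" "v \<in> carrier_vec d" "Dop d 1 j *\<^sub>v v = omega d ^ k \<cdot>\<^sub>v v" "a < d"
  shows "v $ a = v $ 0 * omega_int d (mub_phase d j k a)"
  using assms(5)
proof (induction a)
  case 0
  then show ?case unfolding mub_phase_def by simp
next
  case (Suc a)
  have d0: "d > 0" using assms by simp
  have a: "a < d" using Suc by simp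
  have "(Dop d 1 j *\<^sub>v v) $ Suc a = omega_int d (inv_two d * int j + int j * int a) * v $ a"
    using Dop_1_mult_vec_index[OF assms(1) assms(3) Suc.prems] by (simp add: pred_mod_def)
  moreover have "(Dop d 1 j *\<^sub>v v) $ Suc a = omega_int d (int k) * v $ Suc a"
    using assms(4) Suc.prems assms(3) by (simp add: omega_power)
  ultimately have "omega_int d (int k) * v $ Suc a = omega_int d (inv_two d * int j + int j * int a) * v $ a" by simp
  then have "cnj (omega_int d (int k)) * (omega_int d (int k) * v $ Suc a) = cnj (omega_int d (int k)) * (omega_int d (inv_two d * int j + int j * int a) * v $ a)"
    by simp
  then have "v $ Suc a = (omega_int d (inv_two d * int j + int j * int a) * cnj (omega_int d (int k))) * v $ a"
    by (simp add: mult.assoc[symmetric] mult.commute[of "cnj _"])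
  also have "\<dots> = omega_int d (inv_two d * int j + int j * int a - int k) * (v $ 0 * omega_int d (mub_phase d j k a))"
    using Suc.IH[OF a] omega_int_diff by simp
  also have "\<dots> = v $ 0 * omega_int d (inv_two d * int j + int j * int a - int k + mub_phase d j k a)"
    by (simp add: omega_int_add)
  also have "omega_int d (inv_two d * int j + int j * int a - int k + mub_phase d j k a) = omega_int d (mub_phase d j k (Suc a))"
  proof (rule omega_int_periodic[OF d0])
    show "inv_two d * int j + int j * int a - int k + mub_phase d j k a - mub_phase d j k (Suc a) = int d * (- int j * int a)"
      unfolding mub_phase_def inv_two_odd[OF assms(1)] by (simp add: algebra_simps power2_eq_square)
  qed
  finally show ?case .
qed

lemma outer_eigenvector_Dop_1:
  assumes "odd d" "j < d" "v \<in> carrier_vec d" "vnorm2 v = 1" "Dop d 1 j *\<^sub>v v = omega d ^ k \<cdot>\<^sub>v v"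
  shows "outer v = outer (mub_vec d j k)"
proof -
  have d0: "d > 0" using assms by simp
  have dv: "dim_vec v = d" using assms(3) by simp
  have rec: "\<And>a. a < d \<Longrightarrow> v $ a = v $ 0 * omega_int d (mub_phase d j k a)" using eigenvector_Dop_1_index[OF assms(1,2,3,5)] .
  have "1 = (\<Sum>a<d. (cmod (v $ 0 * omega_int d (mub_phase d j k a)))\<^sup>2)"
    using assms(4) unfolding vnorm2_def dv by (metis (no_types, lifting) lessThan_iff rec sum.cong)
  also have "\<dots> = real d * (cmod (v $ 0))\<^sup>2" by (simp add: norm_mult)
  finally have n: "(cmod (v $ 0))\<^sup>2 = 1 / real d" using d0 by (simp add: field_simps)
  show ?thesis
  proof (rule eq_matI)
    show "dim_row (outer v) = dim_row (outer (mub_vec d j k))" unfolding outer_def dv by simp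
    show "dim_col (outer v) = dim_col (outer (mub_vec d j k))" unfolding outer_def dv by simp
    fix a b assume "a < dim_row (outer (mub_vec d j k))" "b < dim_col (outer (mub_vec d j k))"
    then have a: "a < d" and b: "b < d" unfolding outer_def by auto
    have "outer v $$ (a, b) = (v $ 0 * cnj (v $ 0)) * (omega_int d (mub_phase d j k a) * cnj (omega_int d (mub_phase d j k b)))"
      unfolding outer_def dv using a b rec[OF a] rec[OF b] by (simp add: algebra_simps)
    also have "v $ 0 * cnj (v $ 0) = complex_of_real (1 / real d)" using n complex_norm_square by metis
    also have "complex_of_real (1 / real d) * (omega_int d (mub_phase d j k a) * cnj (omega_int d (mub_phase d j k b)))
        = outer (mub_vec d j k) $$ (a, b)"
      unfolding outer_def using a b mub_vec_index[OF assms(2)] d0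
      by (simp add: algebra_simps of_real_sqrt_mult_self)
    finally show "outer v $$ (a, b) = outer (mub_vec d j k) $$ (a, b)" .
  qed
qed

lemma outer_mub_vec_computational: "k < d \<Longrightarrow> outer (mub_vec d d k) = mat d d (\<lambda>(a, b). if a = k \<and> b = k then 1 else 0)"
  by (intro eq_matI) (auto simp: outer_def mub_vec_index_computational)

lemma mub_proj_eq_outer:
  assumes "odd d" "j \<le> d" "k < d"
  shows "mub_proj d j k = outer (mub_vec d j k)"
proof (cases "j = d")
  case True
  then show ?thesis unfolding mub_proj_def using outer_mub_vec_computational[OF assms(3)] by simp
next
  case False
  then have j: "j < d" using assms by simp
  have "(THE P. \<exists>v \<in> carrier_vec d. vnorm2 v = 1 \<and>
                 Dop d 1 j *\<^sub>v v = (omega d ^ k) \<cdot>\<^sub>v v \<and> P = outer v) = outer (mub_vec d j k)"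
  proof (rule the_equality)
    show "\<exists>v \<in> carrier_vec d. vnorm2 v = 1 \<and> Dop d 1 j *\<^sub>v v = (omega d ^ k) \<cdot>\<^sub>v v \<and> outer (mub_vec d j k) = outer v"
      using mub_vec_carrier vnorm2_mub_vec[OF assms(2,3)] mub_vec_eigen[OF assms(1) j] by blast
    fix P assume "\<exists>v \<in> carrier_vec d. vnorm2 v = 1 \<and> Dop d 1 j *\<^sub>v v = (omega d ^ k) \<cdot>\<^sub>v v \<and> P = outer v"
    then show "P = outer (mub_vec d j k)" using outer_eigenvector_Dop_1[OF assms(1) j] by blast
  qed
  then show ?thesis unfolding mub_proj_def using False by simp
qed

section \<open>Purities as Fourier sums\<close>

definition mub_overlap :: "nat \<Rightarrow> complex mat \<Rightarrow> nat \<Rightarrow> nat \<Rightarrow> complex" where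
  "mub_overlap d \<sigma> j k = (\<Sum>a<d. \<Sum>b<d. \<sigma> $$ (a, b) * mub_vec d j k $ b * cnj (mub_vec d j k $ a))"

definition chirped_diag :: "nat \<Rightarrow> complex mat \<Rightarrow> nat \<Rightarrow> nat \<Rightarrow> complex" where
  "chirped_diag d \<sigma> j t =
     (\<Sum>a<d. omega_int d (inv_two d * int j * (2 * int a * int t + int t ^ 2)) * \<sigma> $$ (a, (a + t) mod d))"

lemma hermitian_op_index:
  assumes "hermitian_op d \<sigma>" "a < d" "b < d"
  shows "\<sigma> $$ (b, a) = cnj (\<sigma> $$ (a, b))"
proof -
  have "\<sigma> \<in> carrier_mat d d" "adjoint_op \<sigma> = \<sigma>" using assms(1) unfolding hermitian_op_def by auto
  then have "\<sigma> $$ (b, a) = adjoint_op \<sigma> $$ (b, a)" by simp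
  also have "\<dots> = cnj (\<sigma> $$ (a, b))" unfolding adjoint_op_def using \<open>\<sigma> \<in> carrier_mat d d\<close> assms by simp
  finally show ?thesis .
qed

lemma power2_Re_eq_power2_cmod: "cnj z = z \<Longrightarrow> (Re z)\<^sup>2 = (cmod z)\<^sup>2"
  by (simp add: complex_eq_iff cmod_power2)

lemma mtrace_mult_outer:
  assumes "\<sigma> \<in> carrier_mat d d" "v \<in> carrier_vec d"
  shows "mtrace (\<sigma> * outer v) = (\<Sum>a<d. \<Sum>b<d. \<sigma> $$ (a, b) * v $ b * cnj (v $ a))"
  unfolding mtrace_def
proof (intro sum.cong)
  fix a assume "a \<in> {..<d}"
  moreover have "outer v \<in> carrier_mat d d" using assms(2) unfolding outer_def by simp
  ultimately have "(\<sigma> * outer v) $$ (a, a) = (\<Sum>b<d. \<sigma> $$ (a, b) * outer v $$ (b, a))"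
    using assms(1) by (simp add: index_mult_mat scalar_prod_def atLeast0LessThan)
  also have "\<dots> = (\<Sum>b<d. \<sigma> $$ (a, b) * v $ b * cnj (v $ a))"
    using \<open>a \<in> {..<d}\<close> assms(2) by (intro sum.cong refl) (simp add: outer_def mult.assoc)
  finally show "(\<sigma> * outer v) $$ (a, a) = (\<Sum>b<d. \<sigma> $$ (a, b) * v $ b * cnj (v $ a))" .
qed (use assms(1) in simp)

lemma mub_prob_eq_Re_overlap:
  assumes "odd d" "\<sigma> \<in> carrier_mat d d" "j \<le> d" "k < d"
  shows "mub_prob d \<sigma> j k = Re (mub_overlap d \<sigma> j k)"
  unfolding mub_prob_def mub_proj_eq_outer[OF assms(1,3,4)] mtrace_mult_outer[OF assms(2) mub_vec_carrier]
    mub_overlap_def ..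

lemma cnj_mub_overlap:
  assumes "hermitian_op d \<sigma>"
  shows "cnj (mub_overlap d \<sigma> j k) = mub_overlap d \<sigma> j k"
proof -
  have "cnj (mub_overlap d \<sigma> j k)
      = (\<Sum>a<d. \<Sum>b<d. \<sigma> $$ (b, a) * mub_vec d j k $ a * cnj (mub_vec d j k $ b))"
    unfolding mub_overlap_def cnj_sum
  proof (intro sum.cong refl)
    fix a b assume "a \<in> {..<d}" "b \<in> {..<d}"
    then have "\<sigma> $$ (b, a) = cnj (\<sigma> $$ (a, b))" by (intro hermitian_op_index[OF assms]) auto
    then show "cnj (\<sigma> $$ (a, b) * mub_vec d j k $ b * cnj (mub_vec d j k $ a))
      = \<sigma> $$ (b, a) * mub_vec d j k $ a * cnj (mub_vec d j k $ b)"
      by (simp only: complex_cnj_mult complex_cnj_cnj mult_ac)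
  qed
  also have "\<dots> = mub_overlap d \<sigma> j k" unfolding mub_overlap_def by (rule sum.swap)
  finally show ?thesis .
qed

lemma purity_sum_eq_overlaps:
  assumes "odd d" "hermitian_op d \<sigma>" "j \<le> d"
  shows "purity_sum d \<sigma> j = (\<Sum>k<d. (cmod (mub_overlap d \<sigma> j k))\<^sup>2)"
proof -
  have "\<sigma> \<in> carrier_mat d d" using assms(2) unfolding hermitian_op_def by simp
  then show ?thesis unfolding purity_sum_def
    by (intro sum.cong refl) (simp add: mub_prob_eq_Re_overlap[OF assms(1) _ assms(3)]
        power2_Re_eq_power2_cmod[OF cnj_mub_overlap[OF assms(2)]])
qed

lemma purity_sum_computational:
  assumes "odd d" "hermitian_op d \<sigma>"
  shows "purity_sum d \<sigma> d = (\<Sum>k<d. (cmod (\<sigma> $$ (k, k)))\<^sup>2)"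
proof -
  have "mub_overlap d \<sigma> d k = \<sigma> $$ (k, k)" if "k < d" for k
  proof -
    have "mub_overlap d \<sigma> d k = (\<Sum>a<d. \<Sum>b<d. if a = k \<and> b = k then \<sigma> $$ (a, b) else 0)"
      unfolding mub_overlap_def by (intro sum.cong refl) (simp add: mub_vec_index_computational)
    also have "\<dots> = (\<Sum>a<d. if a = k then \<sigma> $$ (a, k) else 0)"
      by (intro sum.cong refl) (simp add: sum.delta)
    also have "\<dots> = \<sigma> $$ (k, k)" using that by (simp add: sum.delta)
    finally show ?thesis .
  qed
  then show ?thesis using purity_sum_eq_overlaps[OF assms order.refl] by simp
qed

lemma omega_int_mub_phase_shift:
  assumes "d > 0"
  shows "omega_int d (mub_phase d j k ((a + t) mod d) - mub_phase d j k a)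
       = omega_int d (int k * (-1) * int t) * omega_int d (inv_two d * int j * (2 * int a * int t + int t ^ 2))"
proof -
  have phase: "mub_phase d j k x = inv_two d * int j * int x ^ 2 + (- int k) * int x" for x
    by (simp add: mub_phase_def)
  have "omega_int d (mub_phase d j k ((a + t) mod d) - mub_phase d j k a)
      = omega_int d (mub_phase d j k t) * omega_int d (int a * (2 * (inv_two d * int j) * int t))"
    unfolding omega_int_diff phase omega_int_quadratic_shift[OF assms] by (simp add: mult_ac)
  also have "\<dots> = omega_int d (int k * (-1) * int t) * omega_int d (inv_two d * int j * (2 * int a * int t + int t ^ 2))"
    by (simp add: omega_int_add[symmetric] mub_phase_def algebra_simps)
  finally show ?thesis .
qed

lemma mub_overlap_eq_dft:
  assumes "d > 0" "j < d"
  shows "mub_overlap d \<sigma> j k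
       = complex_of_real (1 / real d) * (\<Sum>t<d. omega_int d (int k * (-1) * int t) * chirped_diag d \<sigma> j t)"
proof -
  let ?c = "complex_of_real (1 / real d)"
  have "mub_overlap d \<sigma> j k
      = (\<Sum>a<d. \<Sum>b<d. ?c * (\<sigma> $$ (a, b) * omega_int d (mub_phase d j k b - mub_phase d j k a)))"
    unfolding mub_overlap_def
  proof (intro sum.cong refl)
    fix a b assume "a \<in> {..<d}" "b \<in> {..<d}"
    moreover have "complex_of_real (1 / sqrt (real d)) * cnj (complex_of_real (1 / sqrt (real d))) = ?c"
      using assms(1) by (simp flip: of_real_mult add: real_sqrt_mult[symmetric])
    ultimately show "\<sigma> $$ (a, b) * mub_vec d j k $ b * cnj (mub_vec d j k $ a)
        = ?c * (\<sigma> $$ (a, b) * omega_int d (mub_phase d j k b - mub_phase d j k a))"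
      using assms(2) by (simp add: mub_vec_index omega_int_diff mult_ac)
  qed
  also have "\<dots> = (\<Sum>a<d. \<Sum>t<d. ?c * (\<sigma> $$ (a, (a + t) mod d)
                     * omega_int d (mub_phase d j k ((a + t) mod d) - mub_phase d j k a)))"
    by (intro sum.cong refl sum_cyclic_shift[OF assms(1), symmetric])
  also have "\<dots> = (\<Sum>a<d. \<Sum>t<d. ?c * (omega_int d (int k * (-1) * int t)
         * (omega_int d (inv_two d * int j * (2 * int a * int t + int t ^ 2)) * \<sigma> $$ (a, (a + t) mod d))))"
    by (intro sum.cong refl) (simp only: omega_int_mub_phase_shift[OF assms(1)] mult_ac)
  also have "\<dots> = (\<Sum>t<d. \<Sum>a<d. ?c * (omega_int d (int k * (-1) * int t)
         * (omega_int d (inv_two d * int j * (2 * int a * int t + int t ^ 2)) * \<sigma> $$ (a, (a + t) mod d))))"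
    by (rule sum.swap)
  also have "\<dots> = ?c * (\<Sum>t<d. omega_int d (int k * (-1) * int t) * chirped_diag d \<sigma> j t)"
    unfolding chirped_diag_def by (simp only: sum_distrib_left)
  finally show ?thesis .
qed

lemma sum_norm_mub_overlap:
  assumes "prime d" "j < d"
  shows "(\<Sum>k<d. (cmod (mub_overlap d \<sigma> j k))\<^sup>2) = (1 / real d) * (\<Sum>t<d. (cmod (chirped_diag d \<sigma> j t))\<^sup>2)"
proof -
  have d0: "d > 0" using assms prime_gt_0_nat by blast
  have nd: "\<not> int d dvd (-1)" using prime_gt_1_nat[OF assms(1)] by fastforce
  have "(\<Sum>k<d. (cmod (mub_overlap d \<sigma> j k))\<^sup>2)
      = (\<Sum>k<d. (1 / real d)\<^sup>2 * (cmod (\<Sum>t<d. omega_int d (int k * (-1) * int t) * chirped_diag d \<sigma> j t))\<^sup>2)"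
    unfolding mub_overlap_eq_dft[OF d0 assms(2)] by (simp add: norm_divide power_divide)
  also have "\<dots> = (1 / real d)\<^sup>2 * (real d * (\<Sum>t<d. (cmod (chirped_diag d \<sigma> j t))\<^sup>2))"
    unfolding sum_distrib_left[symmetric] parseval_omega_int[OF assms(1) nd] ..
  also have "\<dots> = (1 / real d) * (\<Sum>t<d. (cmod (chirped_diag d \<sigma> j t))\<^sup>2)"
    using d0 by (simp add: power2_eq_square)
  finally show ?thesis .
qed

lemma purity_sum_chirp_basis:
  assumes "prime d" "odd d" "hermitian_op d \<sigma>" "j < d"
  shows "purity_sum d \<sigma> j = (1 / real d) * (\<Sum>t<d. (cmod (chirped_diag d \<sigma> j t))\<^sup>2)"
  using purity_sum_eq_overlaps[OF assms(2,3)] sum_norm_mub_overlap[OF assms(1,4)] assms(4) by simp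

lemma chirped_diag_0: "chirped_diag d \<sigma> j 0 = (\<Sum>a<d. \<sigma> $$ (a, a))"
  unfolding chirped_diag_def by simp

text \<open>Up to a phase, the chirp is linear in \<open>a\<close> because \<open>2 \<cdot> inv_two d \<equiv> 1 (mod d)\<close>.\<close>

lemma norm_chirped_diag:
  assumes "odd d"
  shows "cmod (chirped_diag d \<sigma> j t)
       = cmod (\<Sum>a<d. omega_int d (int j * int t * int a) * \<sigma> $$ (a, (a + t) mod d))"
proof -
  have d0: "d > 0" using assms odd_pos by blast
  have "omega_int d (inv_two d * int j * (2 * int a * int t + int t ^ 2))
      = omega_int d (inv_two d * int j * int t ^ 2) * omega_int d (int j * int t * int a)" for a
  proof -
    have "omega_int d (inv_two d * int j * (2 * int a * int t + int t ^ 2))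
        = omega_int d (inv_two d * int j * int t ^ 2 + int j * int t * int a)"
      by (rule omega_int_periodic[OF d0, of _ _ "int j * int t * int a"])
        (simp add: inv_two_odd[OF assms] algebra_simps)
    then show ?thesis by (simp add: omega_int_add)
  qed
  then have "chirped_diag d \<sigma> j t = omega_int d (inv_two d * int j * int t ^ 2)
      * (\<Sum>a<d. omega_int d (int j * int t * int a) * \<sigma> $$ (a, (a + t) mod d))"
    unfolding chirped_diag_def by (simp add: sum_distrib_left mult.assoc)
  then show ?thesis by (simp add: norm_mult)
qed

lemma sum_norm_chirped_diag:
  assumes "prime d" "odd d" "0 < t" "t < d"
  shows "(\<Sum>j<d. (cmod (chirped_diag d \<sigma> j t))\<^sup>2) = real d * (\<Sum>a<d. (cmod (\<sigma> $$ (a, (a + t) mod d)))\<^sup>2)"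
proof -
  have "\<not> int d dvd int t" using assms by (auto dest: dvd_imp_le)
  then show ?thesis unfolding norm_chirped_diag[OF assms(2)]
    using parseval_omega_int[OF assms(1), of "int t" "\<lambda>a. \<sigma> $$ (a, (a + t) mod d)"] by simp
qed

lemma sum_cyclic_diagonals:
  assumes "d > 0"
  shows "(\<Sum>t<d. \<Sum>a<d. (cmod (\<sigma> $$ (a, (a + t) mod d)))\<^sup>2) = (\<Sum>a<d. \<Sum>b<d. (cmod (\<sigma> $$ (a, b)))\<^sup>2)"
  by (subst sum.swap) (intro sum.cong refl sum_cyclic_shift[OF assms])

text \<open>The \<open>t = 0\<close> diagonal contributes \<open>|Tr \<sigma>|\<^sup>2\<close> in every chirp basis, the other cyclic
  diagonals contribute each off-diagonal entry once, and the computational basis supplies the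
  diagonal entries.\<close>

lemma sum_purity_sum:
  assumes "prime d" "odd d" "hermitian_op d \<sigma>"
  shows "(\<Sum>j\<le>d. purity_sum d \<sigma> j)
       = (cmod (\<Sum>a<d. \<sigma> $$ (a, a)))\<^sup>2 + (\<Sum>a<d. \<Sum>b<d. (cmod (\<sigma> $$ (a, b)))\<^sup>2)"
proof -
  have d0: "d > 0" using assms(2) odd_pos by blast
  let ?tr = "(cmod (\<Sum>a<d. \<sigma> $$ (a, a)))\<^sup>2"
  let ?r = "\<lambda>t. (\<Sum>a<d. (cmod (\<sigma> $$ (a, (a + t) mod d)))\<^sup>2)"
  have diag: "(\<Sum>j<d. (cmod (chirped_diag d \<sigma> j t))\<^sup>2) = real d * ?r t + (if t = 0 then real d * (?tr - ?r 0) else 0)"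
    if "t < d" for t
    using sum_norm_chirped_diag[OF assms(1,2) _ that, of \<sigma>]
    by (cases "t = 0") (simp_all add: chirped_diag_0 algebra_simps)
  have "(\<Sum>j<d. purity_sum d \<sigma> j) = (1 / real d) * (\<Sum>j<d. \<Sum>t<d. (cmod (chirped_diag d \<sigma> j t))\<^sup>2)"
    by (simp add: purity_sum_chirp_basis[OF assms] sum_distrib_left)
  also have "\<dots> = (1 / real d) * (\<Sum>t<d. \<Sum>j<d. (cmod (chirped_diag d \<sigma> j t))\<^sup>2)"
    by (subst sum.swap) (rule refl)
  also have "(\<Sum>t<d. \<Sum>j<d. (cmod (chirped_diag d \<sigma> j t))\<^sup>2) = real d * ((\<Sum>t<d. ?r t) + (?tr - ?r 0))"
    using d0 by (simp add: diag sum.distrib sum_distrib_left[symmetric] distrib_left)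
  also have "(1 / real d) * (real d * ((\<Sum>t<d. ?r t) + (?tr - ?r 0))) = (\<Sum>t<d. ?r t) + (?tr - ?r 0)"
    using d0 by simp
  also have "\<dots> = (\<Sum>a<d. \<Sum>b<d. (cmod (\<sigma> $$ (a, b)))\<^sup>2) + ?tr - (\<Sum>a<d. (cmod (\<sigma> $$ (a, a)))\<^sup>2)"
    using sum_cyclic_diagonals[OF d0] by simp
  finally show ?thesis
    using purity_sum_computational[OF assms(2,3)] by (simp add: lessThan_Suc_atMost[symmetric])
qed

section \<open>The lower bound for density operators\<close>

lemma expval_unit_vec:
  assumes "a < d" shows "expval (unit_vec d a) \<sigma> = \<sigma> $$ (a, a)"
proof -
  have "expval (unit_vec d a) \<sigma> = (\<Sum>i<d. \<Sum>l<d. if l = a then (if i = a then \<sigma> $$ (i, l) else 0) else 0)"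
    unfolding expval_def index_unit_vec(3) by (intro sum.cong refl) (auto simp: unit_vec_def)
  then show ?thesis using assms by (simp add: sum.delta)
qed

lemma expval_two_point:
  assumes "a < d" "b < d" "a \<noteq> b"
  shows "expval (vec d (\<lambda>i. if i = a then x else if i = b then y else 0)) \<sigma>
       = cnj x * x * \<sigma> $$ (a, a) + cnj x * y * \<sigma> $$ (a, b) + cnj y * x * \<sigma> $$ (b, a) + cnj y * y * \<sigma> $$ (b, b)"
proof -
  define f where "f = (\<lambda>i. if i = a then x else if i = b then y else (0::complex))"
  have f: "f i = (if i = a then x else 0) + (if i = b then y else 0)" for i
    unfolding f_def using assms by auto
  have delta: "(if P then u else 0) * s * (if Q then v else 0) = (if Q then (if P then u * s * v else 0) else 0)"
    for P Q and u s v :: complex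
    by simp
  have "expval (vec d f) \<sigma> = (\<Sum>i<d. \<Sum>l<d. cnj (f i) * \<sigma> $$ (i, l) * f l)"
    unfolding expval_def by simp
  also have "\<dots> = (\<Sum>i<d. \<Sum>l<d.
        (if i = a then cnj x else 0) * \<sigma> $$ (i, l) * (if l = a then x else 0)
      + (if i = a then cnj x else 0) * \<sigma> $$ (i, l) * (if l = b then y else 0)
      + (if i = b then cnj y else 0) * \<sigma> $$ (i, l) * (if l = a then x else 0)
      + (if i = b then cnj y else 0) * \<sigma> $$ (i, l) * (if l = b then y else 0))"
    by (intro sum.cong refl) (simp add: f algebra_simps)
  also have "\<dots> = cnj x * x * \<sigma> $$ (a, a) + cnj x * y * \<sigma> $$ (a, b) + cnj y * x * \<sigma> $$ (b, a) + cnj y * y * \<sigma> $$ (b, b)"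
    using assms by (simp only: delta sum.distrib) (simp add: sum.delta)
  finally show ?thesis unfolding f_def .
qed

locale positive_op =
  fixes d :: nat and \<sigma> :: "complex mat"
  assumes hermitian: "hermitian_op d \<sigma>"
    and positive: "\<And>v. v \<in> carrier_vec d \<Longrightarrow> 0 \<le> Re (expval v \<sigma>)"
begin

lemma diag_nonneg: "a < d \<Longrightarrow> 0 \<le> Re (\<sigma> $$ (a, a))"
  using positive[of "unit_vec d a"] by (simp add: expval_unit_vec)

lemma two_point_quadratic_nonneg:
  assumes "a < d" "b < d" "a \<noteq> b"
  shows "0 \<le> t\<^sup>2 * Re (\<sigma> $$ (a, a)) - 2 * t * (cmod (\<sigma> $$ (a, b)))\<^sup>2 + (cmod (\<sigma> $$ (a, b)))\<^sup>2 * Re (\<sigma> $$ (b, b))"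
proof -
  define s where "s = \<sigma> $$ (a, b)"
  define s2 where "s2 = (cmod s)\<^sup>2"
  have ss: "s * cnj s = complex_of_real s2" unfolding s2_def using complex_norm_square[of s] by simp
  have ba: "\<sigma> $$ (b, a) = cnj s" unfolding s_def using hermitian_op_index[OF hermitian assms(1,2)] .
  have "expval (vec d (\<lambda>i. if i = a then complex_of_real t else if i = b then - cnj s else 0)) \<sigma>
      = cnj (complex_of_real t) * complex_of_real t * \<sigma> $$ (a, a) + cnj (complex_of_real t) * (- cnj s) * s
        + cnj (- cnj s) * complex_of_real t * cnj s + cnj (- cnj s) * (- cnj s) * \<sigma> $$ (b, b)"
    using expval_two_point[OF assms] ba s_def by simp
  also have "\<dots> = complex_of_real (t\<^sup>2) * \<sigma> $$ (a, a) - complex_of_real t * (s * cnj s)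
      - complex_of_real t * (s * cnj s) + (s * cnj s) * \<sigma> $$ (b, b)"
    by (simp add: algebra_simps power2_eq_square)
  also have "\<dots> = complex_of_real (t\<^sup>2) * \<sigma> $$ (a, a) - complex_of_real (2 * t * s2)
      + complex_of_real s2 * \<sigma> $$ (b, b)"
    unfolding ss by (simp add: algebra_simps)
  finally have "Re (expval (vec d (\<lambda>i. if i = a then complex_of_real t else if i = b then - cnj s else 0)) \<sigma>)
      = t\<^sup>2 * Re (\<sigma> $$ (a, a)) - 2 * t * s2 + s2 * Re (\<sigma> $$ (b, b))"
    by simp
  moreover have "0 \<le> Re (expval (vec d (\<lambda>i. if i = a then complex_of_real t else if i = b then - cnj s else 0)) \<sigma>)"
    by (rule positive) simp
  ultimately show ?thesis unfolding s2_def s_def by simp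
qed

lemma norm_entry_sq_le:
  assumes "a < d" "b < d"
  shows "(cmod (\<sigma> $$ (a, b)))\<^sup>2 \<le> Re (\<sigma> $$ (a, a)) * Re (\<sigma> $$ (b, b))"
proof (cases "a = b")
  case True
  then have "cnj (\<sigma> $$ (a, b)) = \<sigma> $$ (a, b)" using hermitian_op_index[OF hermitian assms(1,1)] by simp
  from power2_Re_eq_power2_cmod[OF this] show ?thesis using True by (simp add: power2_eq_square)
next
  case False
  define A where "A = Re (\<sigma> $$ (a, a))"
  define B where "B = Re (\<sigma> $$ (b, b))"
  define s2 where "s2 = (cmod (\<sigma> $$ (a, b)))\<^sup>2"
  have A0: "A \<ge> 0" and B0: "B \<ge> 0" unfolding A_def B_def using diag_nonneg assms by auto
  have q: "0 \<le> t\<^sup>2 * A - 2 * t * s2 + s2 * B" for t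
    unfolding A_def B_def s2_def using two_point_quadratic_nonneg[OF assms False] .
  show ?thesis
  proof (cases "A = 0")
    case True
    have "s2 * (B + 2) \<le> 0" using q[of "B + 1"] True by (simp add: algebra_simps)
    then have "s2 \<le> 0" using B0 by (simp add: mult_le_0_iff)
    then show ?thesis unfolding s2_def[symmetric] A_def[symmetric] B_def[symmetric] using True by simp
  next
    case False
    then have Ap: "A > 0" using A0 by simp
    have "(s2 / A)\<^sup>2 * A - 2 * (s2 / A) * s2 + s2 * B = s2 * (A * B - s2) / A"
      using Ap by (simp add: field_simps power2_eq_square)
    then have "0 \<le> s2 * (A * B - s2)" using q[of "s2 / A"] Ap by (simp add: zero_le_divide_iff)
    then have "s2 = 0 \<or> s2 \<le> A * B" unfolding s2_def by (auto simp: zero_le_mult_iff)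
    then show ?thesis unfolding s2_def[symmetric] A_def[symmetric] B_def[symmetric] using A0 B0 by auto
  qed
qed

lemma frobenius_le_trace_sq:
  "(\<Sum>a<d. \<Sum>b<d. (cmod (\<sigma> $$ (a, b)))\<^sup>2) \<le> (\<Sum>a<d. Re (\<sigma> $$ (a, a)))\<^sup>2"
proof -
  have "(\<Sum>a<d. \<Sum>b<d. (cmod (\<sigma> $$ (a, b)))\<^sup>2) \<le> (\<Sum>a<d. \<Sum>b<d. Re (\<sigma> $$ (a, a)) * Re (\<sigma> $$ (b, b)))"
    by (intro sum_mono norm_entry_sq_le) auto
  also have "\<dots> = (\<Sum>a<d. Re (\<sigma> $$ (a, a)))\<^sup>2"
    by (simp add: power2_eq_square sum_product)
  finally show ?thesis .
qed

end

lemma density_op_positive_op: "density_op d \<sigma> \<Longrightarrow> positive_op d \<sigma>"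
  unfolding density_op_def positive_op_def by blast

lemma density_op_trace: "density_op d \<sigma> \<Longrightarrow> (\<Sum>a<d. \<sigma> $$ (a, a)) = 1"
  unfolding density_op_def hermitian_op_def mtrace_def by auto

lemma sum_purity_sum_le_2:
  assumes "prime d" "odd d" "density_op d \<sigma>"
  shows "(\<Sum>j\<le>d. purity_sum d \<sigma> j) \<le> 2"
proof -
  interpret positive_op d \<sigma> using density_op_positive_op[OF assms(3)] .
  have tr: "(\<Sum>a<d. \<sigma> $$ (a, a)) = 1" using density_op_trace[OF assms(3)] .
  have "(\<Sum>a<d. Re (\<sigma> $$ (a, a))) = Re (\<Sum>a<d. \<sigma> $$ (a, a))" by (simp add: Re_sum)
  then have "(\<Sum>a<d. Re (\<sigma> $$ (a, a))) = 1" using tr by simp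
  then have "(\<Sum>a<d. \<Sum>b<d. (cmod (\<sigma> $$ (a, b)))\<^sup>2) \<le> 1" using frobenius_le_trace_sq by simp
  then show ?thesis using sum_purity_sum[OF assms(1,2) hermitian] tr by simp
qed

lemma purity_sum_pos:
  assumes "prime d" "odd d" "hermitian_op d \<sigma>" "(\<Sum>a<d. \<sigma> $$ (a, a)) = 1" "j \<le> d"
  shows "purity_sum d \<sigma> j > 0"
proof (cases "j = d")
  case True
  obtain k where k: "k < d" "\<sigma> $$ (k, k) \<noteq> 0"
  proof (rule ccontr)
    assume "\<not> thesis"
    then have "\<forall>k<d. \<sigma> $$ (k, k) = 0" using that by blast
    then have "(\<Sum>a<d. \<sigma> $$ (a, a)) = 0" by simp
    then show False using assms(4) by simp
  qed
  then have "0 < (cmod (\<sigma> $$ (k, k)))\<^sup>2" by simp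
  also have "\<dots> \<le> (\<Sum>k<d. (cmod (\<sigma> $$ (k, k)))\<^sup>2)" by (rule member_le_sum) (use k in auto)
  finally show ?thesis using True purity_sum_computational[OF assms(2,3)] by simp
next
  case False
  have d0: "d > 0" using assms(2) odd_pos by blast
  have "1 = (cmod (chirped_diag d \<sigma> j 0))\<^sup>2" unfolding chirped_diag_0 assms(4) by simp
  also have "\<dots> \<le> (\<Sum>t<d. (cmod (chirped_diag d \<sigma> j t))\<^sup>2)" by (rule member_le_sum) (use d0 in auto)
  finally show ?thesis using purity_sum_chirp_basis[OF assms(1-3)] False assms(5) d0 by simp
qed

text \<open>Concavity of the logarithm, in the form \<open>ln x \<le> x - 1\<close> at \<open>x = n P\<^sub>j / s\<close>.\<close>

lemma neg_sum_log_ge: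
  fixes P :: "'a \<Rightarrow> real"
  assumes "finite A" "\<And>j. j \<in> A \<Longrightarrow> P j > 0" "(\<Sum>j\<in>A. P j) \<le> s" "s > 0"
  shows "card A * log 2 (card A / s) \<le> - (\<Sum>j\<in>A. log 2 (P j))"
proof (cases "A = {}")
  case False
  define n where "n = real (card A)"
  define c where "c = n / s"
  have c0: "c > 0" unfolding c_def n_def using assms(1,4) False by (simp add: card_gt_0_iff)
  have "ln (P j) + ln c \<le> P j * c - 1" if "j \<in> A" for j
    using ln_le_minus_one[of "P j * c"] assms(2)[OF that] c0 by (simp add: ln_mult)
  then have "(\<Sum>j\<in>A. ln (P j) + ln c) \<le> (\<Sum>j\<in>A. P j * c - 1)" by (rule sum_mono)
  then have "(\<Sum>j\<in>A. ln (P j)) + n * ln c \<le> c * (\<Sum>j\<in>A. P j) - n"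
    unfolding n_def by (simp add: sum.distrib sum_subtractf sum_distrib_left algebra_simps)
  also have "\<dots> \<le> c * s - n" using assms(3) c0 by simp
  also have "\<dots> = 0" unfolding c_def using assms(4) by simp
  finally have "n * ln c \<le> - (\<Sum>j\<in>A. ln (P j))" by simp
  then have "n * ln c / ln 2 \<le> - (\<Sum>j\<in>A. ln (P j)) / ln 2" by (rule divide_right_mono) simp
  then show ?thesis unfolding log_def n_def c_def by (simp add: sum_divide_distrib)
qed simp

theorem total_renyi_density_lower_bound:
  assumes "prime d" "odd d" "density_op d \<sigma>"
  shows "T_defined d \<sigma> \<and> (real d + 1) * log 2 ((real d + 1) / 2) \<le> total_renyi d \<sigma>"
proof -
  have pos: "purity_sum d \<sigma> j > 0" if "j \<le> d" for j
    using purity_sum_pos[OF assms(1,2) _ density_op_trace[OF assms(3)] that] assms(3)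
    unfolding density_op_def by blast
  show ?thesis
    using neg_sum_log_ge[of "{..d}" "purity_sum d \<sigma>" 2] pos sum_purity_sum_le_2[OF assms]
    unfolding T_defined_def total_renyi_def by (simp add: add.commute)
qed

section \<open>Fiducial vectors\<close>

lemma norm_expval_Dop:
  assumes "odd d" "\<phi> \<in> carrier_vec d"
  shows "cmod (expval \<phi> (Dop d p1 p2))
       = cmod (\<Sum>b<d. omega_int d (int p2 * int b) * (\<phi> $ b * cnj (\<phi> $ ((b + p1) mod d))))"
proof -
  have d0: "d > 0" using assms by (simp add: odd_pos)
  have "expval \<phi> (Dop d p1 p2) = (\<Sum>a<d. \<Sum>b<d. cnj (\<phi> $ a) * Dop d p1 p2 $$ (a, b) * \<phi> $ b)"
    unfolding expval_def using assms(2) by simp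
  also have "\<dots> = (\<Sum>b<d. \<Sum>a<d. cnj (\<phi> $ a) * Dop d p1 p2 $$ (a, b) * \<phi> $ b)"
    by (rule sum.swap)
  also have "\<dots> = (\<Sum>b<d. \<Sum>a<d. if a = (b + p1) mod d
      then cnj (\<phi> $ a) * omega_int d (inv_two d * int p1 * int p2 + int p2 * int b) * \<phi> $ b else 0)"
    by (intro sum.cong refl) (simp add: Dop_entry[OF assms(1)])
  also have "\<dots> = (\<Sum>b<d. omega_int d (inv_two d * int p1 * int p2)
      * (omega_int d (int p2 * int b) * (\<phi> $ b * cnj (\<phi> $ ((b + p1) mod d)))))"
    using d0 by (intro sum.cong refl) (simp add: sum.delta' omega_int_add mult_ac)
  finally show ?thesis by (simp add: sum_distrib_left[symmetric] norm_mult)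
qed

lemma hermitian_outer: "\<phi> \<in> carrier_vec d \<Longrightarrow> hermitian_op d (outer \<phi>)"
  unfolding hermitian_op_def adjoint_op_def outer_def by (auto intro!: eq_matI)

lemma trace_outer:
  assumes "\<phi> \<in> carrier_vec d" "vnorm2 \<phi> = 1"
  shows "(\<Sum>a<d. outer \<phi> $$ (a, a)) = 1"
proof -
  have "(\<Sum>a<d. outer \<phi> $$ (a, a)) = (\<Sum>a<d. complex_of_real ((cmod (\<phi> $ a))\<^sup>2))"
    using assms(1) unfolding complex_norm_square by (intro sum.cong refl) (simp add: outer_def)
  also have "\<dots> = complex_of_real (vnorm2 \<phi>)" unfolding vnorm2_def using assms(1) by simp
  finally show ?thesis using assms(2) by simp
qed

lemma norm_chirped_diag_outer:
  assumes "odd d" "\<phi> \<in> carrier_vec d"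
  shows "cmod (chirped_diag d (outer \<phi>) j t) = cmod (expval \<phi> (Dop d t ((j * t) mod d)))"
proof -
  have d0: "d > 0" using assms odd_pos by blast
  have "[int ((j * t) mod d) = int j * int t] (mod int d)" by (simp add: of_nat_mod)
  then have "[int ((j * t) mod d) * int b = int j * int t * int b] (mod int d)" for b
    by (rule cong_mult) (rule cong_refl)
  then have "omega_int d (int j * int t * int b) = omega_int d (int ((j * t) mod d) * int b)" for b
    using omega_int_cong[OF d0] by metis
  then show ?thesis
    unfolding norm_chirped_diag[OF assms(1)] norm_expval_Dop[OF assms]
    using assms(2) by (simp add: outer_def)
qed

lemma sum_sic_profile:
  fixes f :: "nat \<Rightarrow> real"
  assumes "d > 0" "f 0 = 1" "\<And>t. 0 < t \<Longrightarrow> t < d \<Longrightarrow> f t = 1 / (real d + 1)"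
  shows "(1 / real d) * (\<Sum>t<d. f t) = 2 / (real d + 1)"
proof -
  have "(\<Sum>t = 1..d - 1. f t) = (\<Sum>t = 1..d - 1. 1 / (real d + 1))"
    using assms(1,3) by (intro sum.cong refl) auto
  then have "(\<Sum>t<d. f t) = 1 + (real d - 1) / (real d + 1)"
    using assms(1,2) by (simp add: sum_lessThan_split_0[OF assms(1)] of_nat_diff)
  then show ?thesis using assms(1) by (simp add: field_simps)
qed

lemma purity_sum_fiducial:
  assumes "prime d" "odd d" "fiducial d \<phi>" "j \<le> d"
  shows "purity_sum d (outer \<phi>) j = 2 / (real d + 1)"
proof -
  have d0: "d > 0" using assms(2) odd_pos by blast
  have \<phi>: "\<phi> \<in> carrier_vec d" "vnorm2 \<phi> = 1"
    and sic: "\<And>p1 p2. p1 < d \<Longrightarrow> p2 < d \<Longrightarrow> (p1, p2) \<noteq> (0, 0)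
               \<Longrightarrow> (cmod (expval \<phi> (Dop d p1 p2)))\<^sup>2 = 1 / (real d + 1)"
    using assms(3) unfolding fiducial_def by auto
  note purity = purity_sum_chirp_basis[OF assms(1,2) hermitian_outer[OF \<phi>(1)]]
  show ?thesis
  proof (cases "j = d")
    case True
    define x where "x b = \<phi> $ b * cnj (\<phi> $ b)" for b
    have "\<not> int d dvd 1" using prime_gt_1_nat[OF assms(1)] by simp
    from parseval_omega_int[OF assms(1) this, of x]
    have "(\<Sum>b<d. (cmod (x b))\<^sup>2) = (1 / real d) * (\<Sum>p<d. (cmod (\<Sum>b<d. omega_int d (int p * 1 * int b) * x b))\<^sup>2)"
      using d0 by simp
    also have "\<dots> = 2 / (real d + 1)"
    proof (rule sum_sic_profile[OF d0])
      show "(cmod (\<Sum>b<d. omega_int d (int 0 * 1 * int b) * x b))\<^sup>2 = 1"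
        using trace_outer[OF \<phi>] \<phi>(1) unfolding x_def by (simp add: outer_def)
      fix p assume "0 < p" "p < d"
      moreover have "cmod (\<Sum>b<d. omega_int d (int p * 1 * int b) * x b) = cmod (expval \<phi> (Dop d 0 p))"
        unfolding norm_expval_Dop[OF assms(2) \<phi>(1)] x_def by simp
      ultimately show "(cmod (\<Sum>b<d. omega_int d (int p * 1 * int b) * x b))\<^sup>2 = 1 / (real d + 1)"
        using sic[of 0 p] d0 by simp
    qed
    finally show ?thesis
      using True purity_sum_computational[OF assms(2) hermitian_outer[OF \<phi>(1)]] \<phi>(1)
      by (simp add: x_def outer_def)
  next
    case False
    then have "j < d" using assms(4) by simp
    have "(1 / real d) * (\<Sum>t<d. (cmod (chirped_diag d (outer \<phi>) j t))\<^sup>2) = 2 / (real d + 1)"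
    proof (rule sum_sic_profile[OF d0])
      show "(cmod (chirped_diag d (outer \<phi>) j 0))\<^sup>2 = 1"
        unfolding chirped_diag_0 trace_outer[OF \<phi>] by simp
      fix t assume "0 < t" "t < d"
      then show "(cmod (chirped_diag d (outer \<phi>) j t))\<^sup>2 = 1 / (real d + 1)"
        using sic[of t "(j * t) mod d"] d0 norm_chirped_diag_outer[OF assms(2) \<phi>(1)] by simp
    qed
    then show ?thesis using purity[OF \<open>j < d\<close>] by simp
  qed
qed

lemma total_renyi_const_purity:
  assumes "\<And>j. j \<le> d \<Longrightarrow> purity_sum d \<sigma> j = 2 / (real d + 1)"
  shows "T_defined d \<sigma> \<and> total_renyi d \<sigma> = (real d + 1) * log 2 ((real d + 1) / 2)"
proof -
  have "total_renyi d \<sigma> = - (\<Sum>j\<le>d. log 2 (2 / (real d + 1)))"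
    unfolding total_renyi_def using assms by simp
  also have "\<dots> = (real d + 1) * log 2 ((real d + 1) / 2)"
    by (simp add: log_divide algebra_simps)
  finally show ?thesis unfolding T_defined_def using assms by simp
qed

theorem total_renyi_fiducial:
  assumes "prime d" "odd d" "fiducial d \<phi>"
  shows "T_defined d (outer \<phi>) \<and> total_renyi d (outer \<phi>) = (real d + 1) * log 2 ((real d + 1) / 2)"
  using purity_sum_fiducial[OF assms] by (rule total_renyi_const_purity)

section \<open>The states of \<open>\<Omega>\<close>\<close>

definition vinner :: "nat \<Rightarrow> complex vec \<Rightarrow> complex vec \<Rightarrow> complex" where
  "vinner d u v = (\<Sum>a<d. u $ a * cnj (v $ a))"

lemma cnj_vinner: "cnj (vinner d u v) = vinner d v u"
  unfolding vinner_def cnj_sum by (simp add: mult.commute)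

lemma mub_vec_index_mult_cnj:
  assumes "j < d" "j' < d" "a < d"
  shows "mub_vec d j k $ a * cnj (mub_vec d j' k' $ a) = complex_of_real (1 / real d) *
          omega_int d ((inv_two d * (int j - int j')) * int a ^ 2 + (int k' - int k) * int a)"
proof -
  have "complex_of_real (1 / sqrt (real d)) * complex_of_real (1 / sqrt (real d)) = complex_of_real (1 / real d)"
    by (simp flip: of_real_mult add: real_sqrt_mult[symmetric])
  moreover have "omega_int d (mub_phase d j k a) * cnj (omega_int d (mub_phase d j' k' a))
      = omega_int d ((inv_two d * (int j - int j')) * int a ^ 2 + (int k' - int k) * int a)"
    unfolding omega_int_diff[symmetric] mub_phase_def by (simp add: algebra_simps)
  ultimately show ?thesis
    unfolding mub_vec_index[OF assms(1,3)] mub_vec_index[OF assms(2,3)] by (simp add: mult_ac)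
qed

lemma vinner_mub_vec_same_chirp:
  assumes "prime d" "j < d" "k < d" "k' < d"
  shows "vinner d (mub_vec d j k) (mub_vec d j k') = (if k = k' then 1 else 0)"
proof -
  have d0: "d > 0" using assms by simp
  have "vinner d (mub_vec d j k) (mub_vec d j k')
      = complex_of_real (1 / real d) * (\<Sum>a<d. omega_int d (int a * (int k' - int k)))"
    unfolding vinner_def sum_distrib_left
    by (intro sum.cong refl) (simp add: mub_vec_index_mult_cnj[OF assms(2,2)] mult.commute)
  moreover have "int d dvd (int k' - int k) \<longleftrightarrow> k' = k" using eq_if_dvd_diff_less[OF assms(4,3)] by auto
  ultimately show ?thesis using d0 by (auto simp: sum_omega_int_mult)
qed

lemma norm_vinner_mub_vec_distinct_chirps:
  assumes "prime d" "odd d" "j < d" "j' < d" "j \<noteq> j'"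
  shows "(cmod (vinner d (mub_vec d j k) (mub_vec d j' k')))\<^sup>2 = 1 / real d"
proof -
  have d0: "d > 0" using assms by simp
  let ?A = "inv_two d * (int j - int j')"
  have nd: "\<not> int d dvd (2 * ?A)"
  proof
    assume "int d dvd (2 * ?A)"
    moreover have "2 * ?A = int d * (int j - int j') + (int j - int j')"
      unfolding inv_two_odd[OF assms(2)] by (simp add: algebra_simps)
    ultimately have "int d dvd (int j - int j')" by (metis dvd_add_right_iff dvd_triv_left)
    then show False using eq_if_dvd_diff_less[OF assms(3,4)] assms(5) by simp
  qed
  have "vinner d (mub_vec d j k) (mub_vec d j' k')
      = complex_of_real (1 / real d) * (\<Sum>a<d. omega_int d (?A * int a ^ 2 + (int k' - int k) * int a))"
    unfolding vinner_def sum_distrib_left by (intro sum.cong refl) (simp add: mub_vec_index_mult_cnj[OF assms(3,4)])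
  then have "(cmod (vinner d (mub_vec d j k) (mub_vec d j' k')))\<^sup>2
      = (1 / real d)\<^sup>2 * (cmod (\<Sum>a<d. omega_int d (?A * int a ^ 2 + (int k' - int k) * int a)))\<^sup>2"
    by (simp add: norm_divide power_divide)
  also have "\<dots> = (1 / real d)\<^sup>2 * real d" unfolding norm_gauss_sum_sq[OF assms(1) nd] ..
  also have "\<dots> = 1 / real d" using d0 by (simp add: power2_eq_square)
  finally show ?thesis .
qed

lemma vinner_mub_vec_computational:
  assumes "k < d" "k' < d"
  shows "vinner d (mub_vec d d k) (mub_vec d d k') = (if k = k' then 1 else 0)"
proof -
  have "vinner d (mub_vec d d k) (mub_vec d d k') = (\<Sum>a<d. if a = k then (if k = k' then 1 else 0) else 0)"
    unfolding vinner_def by (intro sum.cong refl) (auto simp: mub_vec_index_computational)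
  then show ?thesis using assms by (simp add: sum.delta)
qed

lemma norm_vinner_mub_vec_computational_chirp:
  assumes "j < d" "k < d" "k' < d"
  shows "(cmod (vinner d (mub_vec d d k) (mub_vec d j k')))\<^sup>2 = 1 / real d"
proof -
  have "vinner d (mub_vec d d k) (mub_vec d j k') = (\<Sum>a<d. if a = k then cnj (mub_vec d j k' $ a) else 0)"
    unfolding vinner_def by (intro sum.cong refl) (auto simp: mub_vec_index_computational)
  also have "\<dots> = cnj (mub_vec d j k' $ k)" using assms by (simp add: sum.delta)
  finally show ?thesis using assms by (simp add: mub_vec_index norm_mult norm_divide power_divide)
qed

theorem norm_vinner_mub_vec:
  assumes "prime d" "odd d" "j \<le> d" "j' \<le> d" "k < d" "k' < d"
  shows "(cmod (vinner d (mub_vec d j k) (mub_vec d j' k')))\<^sup>2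
       = (if j = j' then (if k = k' then 1 else 0) else 1 / real d)"
proof -
  consider "j = d" "j' = d" | "j = d" "j' < d" | "j < d" "j' = d" | "j < d" "j' < d"
    using assms(3,4) by linarith
  then show ?thesis
  proof cases
    case 1
    then show ?thesis using vinner_mub_vec_computational[OF assms(5,6)] by simp
  next
    case 2
    then show ?thesis using norm_vinner_mub_vec_computational_chirp[OF _ assms(5,6)] by simp
  next
    case 3
    then show ?thesis
      using norm_vinner_mub_vec_computational_chirp[OF _ assms(6,5), of j] cnj_vinner[of d "mub_vec d j k"]
      by (metis complex_mod_cnj less_irrefl)
  next
    case 4
    then show ?thesis
      using vinner_mub_vec_same_chirp[OF assms(1) _ assms(5,6)] norm_vinner_mub_vec_distinct_chirps[OF assms(1,2)]
      by auto
  qed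
qed

lemma sum_swap_pairs:
  "(\<Sum>a\<in>A. \<Sum>b\<in>B. \<Sum>j\<in>J. \<Sum>k\<in>K. f a b j k) = (\<Sum>j\<in>J. \<Sum>k\<in>K. \<Sum>a\<in>A. \<Sum>b\<in>B. f a b j k)"
proof -
  have "(\<Sum>a\<in>A. \<Sum>b\<in>B. \<Sum>j\<in>J. \<Sum>k\<in>K. f a b j k) = (\<Sum>a\<in>A. \<Sum>j\<in>J. \<Sum>b\<in>B. \<Sum>k\<in>K. f a b j k)"
    by (rule sum.cong[OF refl], rule sum.swap)
  also have "\<dots> = (\<Sum>j\<in>J. \<Sum>a\<in>A. \<Sum>k\<in>K. \<Sum>b\<in>B. f a b j k)"
    by (subst sum.swap) (rule sum.cong[OF refl], rule sum.cong[OF refl], rule sum.swap)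
  also have "\<dots> = (\<Sum>j\<in>J. \<Sum>k\<in>K. \<Sum>a\<in>A. \<Sum>b\<in>B. f a b j k)"
    by (rule sum.cong[OF refl], rule sum.swap)
  finally show ?thesis .
qed

lemma mub_overlap_combination:
  fixes c :: "nat \<Rightarrow> nat \<Rightarrow> complex"
  assumes "odd d" "j' \<le> d" "k' < d"
  shows "mub_overlap d (mat d d (\<lambda>(a, b). \<Sum>j\<le>d. \<Sum>k<d. c j k * mub_proj d j k $$ (a, b))) j' k'
       = (\<Sum>j\<le>d. \<Sum>k<d. c j k * complex_of_real ((cmod (vinner d (mub_vec d j k) (mub_vec d j' k')))\<^sup>2))"
proof -
  let ?u = "\<lambda>j k. mub_vec d j k" and ?v = "mub_vec d j' k'"
  let ?\<rho> = "mat d d (\<lambda>(a, b). \<Sum>j\<le>d. \<Sum>k<d. c j k * mub_proj d j k $$ (a, b))"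
  have "mub_overlap d ?\<rho> j' k'
      = (\<Sum>a<d. \<Sum>b<d. \<Sum>j\<le>d. \<Sum>k<d. c j k * ((?u j k $ a * cnj (?v $ a)) * (cnj (?u j k $ b) * ?v $ b)))"
    unfolding mub_overlap_def
  proof (intro sum.cong refl)
    fix a b assume ab: "a \<in> {..<d}" "b \<in> {..<d}"
    have "?\<rho> $$ (a, b) = (\<Sum>j\<le>d. \<Sum>k<d. c j k * (?u j k $ a * cnj (?u j k $ b)))"
      using ab by (auto intro!: sum.cong simp: mub_proj_eq_outer[OF assms(1)] outer_def)
    then have "?\<rho> $$ (a, b) * ?v $ b * cnj (?v $ a)
        = (\<Sum>j\<le>d. \<Sum>k<d. c j k * (?u j k $ a * cnj (?u j k $ b)) * (?v $ b * cnj (?v $ a)))"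
      by (simp only: mult.assoc sum_distrib_right)
    also have "\<dots> = (\<Sum>j\<le>d. \<Sum>k<d. c j k * ((?u j k $ a * cnj (?v $ a)) * (cnj (?u j k $ b) * ?v $ b)))"
      by (intro sum.cong refl) (simp only: mult_ac)
    finally show "?\<rho> $$ (a, b) * ?v $ b * cnj (?v $ a)
        = (\<Sum>j\<le>d. \<Sum>k<d. c j k * ((?u j k $ a * cnj (?v $ a)) * (cnj (?u j k $ b) * ?v $ b)))" .
  qed
  also have "\<dots> = (\<Sum>j\<le>d. \<Sum>k<d. \<Sum>a<d. \<Sum>b<d. c j k * ((?u j k $ a * cnj (?v $ a)) * (cnj (?u j k $ b) * ?v $ b)))"
    by (rule sum_swap_pairs)
  also have "\<dots> = (\<Sum>j\<le>d. \<Sum>k<d. c j k * (vinner d (?u j k) ?v * cnj (vinner d (?u j k) ?v)))"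
  proof (intro sum.cong refl)
    fix j k
    have "vinner d (?u j k) ?v * cnj (vinner d (?u j k) ?v)
        = (\<Sum>a<d. \<Sum>b<d. (?u j k $ a * cnj (?v $ a)) * (cnj (?u j k $ b) * ?v $ b))"
      unfolding vinner_def cnj_sum complex_cnj_mult complex_cnj_cnj by (rule sum_product)
    then show "(\<Sum>a<d. \<Sum>b<d. c j k * ((?u j k $ a * cnj (?v $ a)) * (cnj (?u j k $ b) * ?v $ b)))
        = c j k * (vinner d (?u j k) ?v * cnj (vinner d (?u j k) ?v))"
      by (simp only: sum_distrib_left)
  qed
  finally show ?thesis by (simp only: complex_norm_square)
qed

lemma mub_overlap_combination_balanced:
  fixes c :: "nat \<Rightarrow> nat \<Rightarrow> complex"
  assumes "prime d" "odd d" "j' \<le> d" "k' < d" "\<And>j. j \<le> d \<Longrightarrow> (\<Sum>k<d. c j k) = s"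
  shows "mub_overlap d (mat d d (\<lambda>(a, b). \<Sum>j\<le>d. \<Sum>k<d. c j k * mub_proj d j k $$ (a, b))) j' k'
       = c j' k' + s"
proof -
  have d0: "d > 0" using assms(1) prime_gt_0_nat by blast
  have row: "(\<Sum>k<d. c j k * complex_of_real ((cmod (vinner d (mub_vec d j k) (mub_vec d j' k')))\<^sup>2))
      = (if j = j' then c j' k' else s / of_nat d)" if "j \<le> d" for j
  proof -
    have "(\<Sum>k<d. c j k * complex_of_real ((cmod (vinner d (mub_vec d j k) (mub_vec d j' k')))\<^sup>2))
        = (\<Sum>k<d. if j = j' then (if k = k' then c j k else 0) else c j k / of_nat d)"
    proof (intro sum.cong refl)
      fix k assume "k \<in> {..<d}"
      then have "(cmod (vinner d (mub_vec d j k) (mub_vec d j' k')))\<^sup>2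
          = (if j = j' then (if k = k' then 1 else 0) else 1 / real d)"
        using norm_vinner_mub_vec[OF assms(1,2) that assms(3) _ assms(4)] by simp
      then show "c j k * complex_of_real ((cmod (vinner d (mub_vec d j k) (mub_vec d j' k')))\<^sup>2)
          = (if j = j' then (if k = k' then c j k else 0) else c j k / of_nat d)"
        by simp
    qed
    then show ?thesis using assms(4) assms(5)[OF that] by (simp add: sum.delta sum_divide_distrib[symmetric])
  qed
  have "mub_overlap d (mat d d (\<lambda>(a, b). \<Sum>j\<le>d. \<Sum>k<d. c j k * mub_proj d j k $$ (a, b))) j' k'
      = (\<Sum>j\<le>d. if j = j' then c j' k' else s / of_nat d)"
    unfolding mub_overlap_combination[OF assms(2-4)] by (intro sum.cong refl) (rule row, simp)
  also have "\<dots> = (\<Sum>j\<le>d. s / of_nat d + (if j = j' then c j' k' - s / of_nat d else 0))"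
    by (intro sum.cong refl) simp
  also have "\<dots> = of_nat (Suc d) * (s / of_nat d) + (c j' k' - s / of_nat d)"
    using assms(3) by (simp add: sum.distrib)
  also have "\<dots> = c j' k' + s" using d0 by (simp add: field_simps)
  finally show ?thesis .
qed

definition pcoef_dft :: "nat \<Rightarrow> (nat \<Rightarrow> nat \<Rightarrow> real) \<Rightarrow> nat \<Rightarrow> nat \<Rightarrow> complex" where
  "pcoef_dft d \<alpha> j r = (if r = 0 then 1 / of_nat d
      else 1 / (complex_of_nat d * complex_of_real (sqrt (real d + 1))) * omega_pow d (\<alpha> j r))"

lemma omega_pow_add: "omega_pow d (x + y) = omega_pow d x * omega_pow d y"
  unfolding omega_pow_def by (simp add: exp_add[symmetric] add_divide_distrib distrib_left)

lemma omega_pow_of_nat: "omega_pow d (real n) = omega_int d (int n)"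
  unfolding omega_pow_def omega_int_def by simp

lemma omega_pow_cis: "omega_pow d x = cis (2 * pi * x / real d)"
  unfolding omega_pow_def cis_conv_exp by (simp add: field_simps)

lemma cnj_omega_pow: "cnj (omega_pow d x) = omega_pow d (- x)"
  unfolding omega_pow_cis by (simp add: cis_cnj)

lemma norm_omega_pow [simp]: "cmod (omega_pow d x) = 1"
  unfolding omega_pow_cis by simp

lemma pcoef_eq_dft:
  assumes "d > 0"
  shows "pcoef d \<alpha> j k = (\<Sum>r<d. omega_int d (int k * 1 * int r) * pcoef_dft d \<alpha> j r)"
proof -
  have "(\<Sum>r = 1..d - 1. omega_int d (int k * 1 * int r) * pcoef_dft d \<alpha> j r) =
     1 / (complex_of_nat d * complex_of_real (sqrt (real d + 1))) * (\<Sum>r = 1..d - 1. omega_pow d (\<alpha> j r + real (k * r)))"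
    unfolding sum_distrib_left
  proof (intro sum.cong refl)
    fix r assume "r \<in> {1..d - 1}"
    then show "omega_int d (int k * 1 * int r) * pcoef_dft d \<alpha> j r
      = 1 / (complex_of_nat d * complex_of_real (sqrt (real d + 1))) * omega_pow d (\<alpha> j r + real (k * r))"
      unfolding pcoef_dft_def omega_pow_add omega_pow_of_nat by (simp add: mult_ac)
  qed
  then show ?thesis unfolding pcoef_def sum_lessThan_split_0[OF assms] by (simp add: pcoef_dft_def)
qed

lemma sum_pcoef:
  assumes "prime d"
  shows "(\<Sum>k<d. pcoef d \<alpha> j k) = 1"
proof -
  have d0: "d > 0" using assms prime_gt_0_nat by blast
  have "(\<Sum>k<d. pcoef d \<alpha> j k) = (\<Sum>r<d. \<Sum>k<d. omega_int d (int k * 1 * int r) * pcoef_dft d \<alpha> j r)"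
    unfolding pcoef_eq_dft[OF d0] by (rule sum.swap)
  also have "\<dots> = (\<Sum>r<d. if r = 0 then of_nat d * pcoef_dft d \<alpha> j r else 0)"
  proof (intro sum.cong refl)
    fix r assume "r \<in> {..<d}"
    then have "int d dvd int r \<longleftrightarrow> r = 0" using eq_if_dvd_diff_less[of r d 0] by auto
    then show "(\<Sum>k<d. omega_int d (int k * 1 * int r) * pcoef_dft d \<alpha> j r) = (if r = 0 then of_nat d * pcoef_dft d \<alpha> j r else 0)"
      by (simp add: sum_distrib_right[symmetric] sum_omega_int_mult[OF d0])
  qed
  also have "\<dots> = 1" using d0 by (simp add: pcoef_dft_def)
  finally show ?thesis .
qed

lemma sum_norm_pcoef_sq:
  assumes "prime d"
  shows "(\<Sum>k<d. (cmod (pcoef d \<alpha> j k))\<^sup>2) = 2 / (real d + 1)"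
proof -
  have d0: "d > 0" using assms prime_gt_0_nat by blast
  have "\<not> int d dvd 1" using prime_gt_1_nat[OF assms] by simp
  then have "(\<Sum>k<d. (cmod (pcoef d \<alpha> j k))\<^sup>2) = real d * (\<Sum>r<d. (cmod (pcoef_dft d \<alpha> j r))\<^sup>2)"
    unfolding pcoef_eq_dft[OF d0] by (rule parseval_omega_int[OF assms])
  also have "(\<Sum>r = 1..d - 1. (cmod (pcoef_dft d \<alpha> j r))\<^sup>2) = (\<Sum>r = 1..d - 1. 1 / (real d ^ 2 * (real d + 1)))"
    by (intro sum.cong refl) (auto simp: pcoef_dft_def norm_mult norm_divide power_divide power_mult_distrib)
  then have "(\<Sum>r<d. (cmod (pcoef_dft d \<alpha> j r))\<^sup>2) = 1 / real d ^ 2 + (real d - 1) / (real d ^ 2 * (real d + 1))"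
    unfolding sum_lessThan_split_0[OF d0] using d0 by (simp add: pcoef_dft_def norm_divide power_divide of_nat_diff)
  also have "real d * \<dots> = 2 / (real d + 1)"
  proof -
    have "real d > 0" "real d * real d > 0" "real d * (real d * real d) > 0" using d0 by simp_all
    then have "real d \<noteq> 0" "real d + 1 \<noteq> 0" "real d * real d + real d * (real d * real d) \<noteq> 0"
      "real d + real d * real d \<noteq> 0"
      by linarith+
    then show ?thesis by (simp add: field_simps power2_eq_square)
  qed
  finally show ?thesis .
qed

text \<open>The antisymmetry \<open>\<alpha>\<^sup>j\<^sub>d\<^sub>-\<^sub>r = -\<alpha>\<^sup>j\<^sub>r\<close> makes the sum over \<open>r\<close> invariant under conjugation
  followed by the reflection \<open>r \<mapsto> d - r\<close>.\<close>

lemma pcoef_real: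
  assumes "d > 0" "\<forall>r\<in>{1..d-1}. \<alpha> j (d - r) = - \<alpha> j r"
  shows "cnj (pcoef d \<alpha> j k) = pcoef d \<alpha> j k"
proof -
  have reflect: "cnj (omega_pow d (\<alpha> j r + real (k * r)))
      = omega_pow d (\<alpha> j (d - 1 + 1 - r) + real (k * (d - 1 + 1 - r)))" if "r \<in> {1..d - 1}" for r
  proof -
    have "d - 1 + 1 - r = d - r" using assms(1) by simp
    moreover have "\<alpha> j (d - r) + real (k * (d - r)) = - (\<alpha> j r + real (k * r)) + real (k * d)"
      using assms(2) that by (auto simp: of_nat_diff right_diff_distrib)
    ultimately have "omega_pow d (\<alpha> j (d - 1 + 1 - r) + real (k * (d - 1 + 1 - r)))
        = omega_pow d (- (\<alpha> j r + real (k * r))) * omega_pow d (real (k * d))"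
      by (simp only: omega_pow_add)
    also have "omega_pow d (real (k * d)) = 1"
      unfolding omega_pow_of_nat using omega_int_multiple[OF assms(1), of "int k"] by (simp add: mult.commute)
    finally show ?thesis by (simp add: cnj_omega_pow)
  qed
  have "(\<Sum>r = 1..d - 1. cnj (omega_pow d (\<alpha> j r + real (k * r))))
      = (\<Sum>r = 1..d - 1. omega_pow d (\<alpha> j (d - 1 + 1 - r) + real (k * (d - 1 + 1 - r))))"
    using reflect by (rule sum.cong[OF refl])
  also have "\<dots> = (\<Sum>r = 1..d - 1. omega_pow d (\<alpha> j r + real (k * r)))"
    by (rule sum.atLeastAtMost_rev[symmetric])
  finally show ?thesis unfolding pcoef_def by (simp add: cnj_sum)
qed

lemma mub_overlap_Omega_state:
  assumes "prime d" "odd d" "j \<le> d" "k < d"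
  shows "mub_overlap d (mat d d (\<lambda>(a, b). \<Sum>j\<le>d. \<Sum>k<d.
            (pcoef d \<alpha> j k - 1 / (of_nat d + 1)) * mub_proj d j k $$ (a, b))) j k
       = pcoef d \<alpha> j k"
proof -
  have "(of_nat d + 1 :: complex) \<noteq> 0" by (metis of_nat_Suc of_nat_eq_0_iff nat.distinct(1) add.commute)
  then have "1 - of_nat d / (of_nat d + 1) = (1 / (of_nat d + 1) :: complex)"
    by (simp add: field_simps)
  then have "(\<Sum>k<d. pcoef d \<alpha> j k - 1 / (of_nat d + 1)) = 1 / (of_nat d + 1)" for j
    by (simp add: sum_subtractf sum_pcoef[OF assms(1)])
  then show ?thesis by (subst mub_overlap_combination_balanced[OF assms]) auto
qed

theorem total_renyi_Omega:
  assumes "prime d" "odd d" "\<rho> \<in> Omega d"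
  shows "T_defined d \<rho> \<and> total_renyi d \<rho> = (real d + 1) * log 2 ((real d + 1) / 2)"
proof -
  obtain \<alpha> where anti: "\<forall>j\<le>d. \<forall>r\<in>{1..d-1}. \<alpha> j (d - r) = - \<alpha> j r"
    and \<rho>: "\<rho> = mat d d (\<lambda>(a, b). \<Sum>j\<le>d. \<Sum>k<d.
                  (pcoef d \<alpha> j k - 1 / (of_nat d + 1)) * mub_proj d j k $$ (a, b))"
    using assms(3) unfolding Omega_def by blast
  have d0: "d > 0" using assms(1) prime_gt_0_nat by blast
  show ?thesis
  proof (rule total_renyi_const_purity)
    fix j assume j: "j \<le> d"
    have "mub_prob d \<rho> j k = Re (pcoef d \<alpha> j k)" if "k < d" for k
      using mub_prob_eq_Re_overlap[OF assms(2) _ j that] mub_overlap_Omega_state[OF assms(1,2) j that]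
      unfolding \<rho> by simp
    then have "purity_sum d \<rho> j = (\<Sum>k<d. (cmod (pcoef d \<alpha> j k))\<^sup>2)"
      unfolding purity_sum_def using anti j d0
      by (intro sum.cong refl) (simp add: power2_Re_eq_power2_cmod pcoef_real)
    then show "purity_sum d \<rho> j = 2 / (real d + 1)" by (simp add: sum_norm_pcoef_sq[OF assms(1)])
  qed
qed

theorem mainTheorem5:
  fixes d :: nat
  assumes "prime d" and "odd d"
  shows "(\<forall>\<sigma>. density_op d \<sigma> \<longrightarrow>
            T_defined d \<sigma> \<and>
            total_renyi d \<sigma> \<ge> (real d + 1) * log 2 ((real d + 1) / 2))
       \<and> (\<forall>\<rho> \<in> Omega d. T_defined d \<rho> \<and>
            total_renyi d \<rho> = (real d + 1) * log 2 ((real d + 1) / 2))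
       \<and> (\<forall>\<phi>. fiducial d \<phi> \<longrightarrow> T_defined d (outer \<phi>) \<and>
            total_renyi d (outer \<phi>) = (real d + 1) * log 2 ((real d + 1) / 2))"
  using total_renyi_density_lower_bound[OF assms] total_renyi_Omega[OF assms]
    total_renyi_fiducial[OF assms]
  by blast

end
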